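(* Let $a,b,c,d\in\mathbb C$ and let $\phi_1,\phi_2$ be holomorphic functions on an open set $\mathcal U\subset\mathbb C$ satisfying $$(az^2+b)\phi_1'(z)+(cz^2+d)\phi_2'(z)=2\quad\text{on }\mathcal U.$$ Let $W\subset\mathbb C^2$ be an open set of parameters $(r,s)$ and $C=C_1\cup C_2\subset\mathcal U$ two disjoint simple closed curves bounding disjoint closed discs $\Delta_1,\Delta_2\subset\mathbb C$ such that, for all $(r,s)\in W$, $\Delta_1$ contains $\pm\sqrt r$ and $\Delta_2$ contains $\pm\sqrt s$; let $\chi(z)=(z^2-r)^{-1/2}(z^2-s)^{-1/2}$ be the branch which is single-valued and holomorphic on $\mathbb C\setminus(\Delta_1\cup\Delta_2)$ (cuts joining $\pm\sqrt r$ inside $\Delta_1$ and $\pm\sqrt s$ inside $\Delta_2$), and orient $C$ as the boundary of the region $(\mathbb C\cup\{\infty\})\setminus(\Delta_1\cup\Delta_2)$. Define, for $(r,s)\in W$ and $i=1,2$, $$G_i(r,s)=-\frac{1}{4\pi i}\int_C\frac{z\,\phi_i(z)}{(z^2-r)^{1/2}(z^2-s)^{1/2}}\,dz.$$ Then $$(ar+b)\frac{\partial G_1}{\partial r}+(cr+d)\frac{\partial G_2}{\partial r}+(as+b)\frac{\partial G_1}{\partial s}+(cs+d)\frac{\partial G_2}{\partial s}=0\quad\text{on }W.$$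
   Context: This is the relation, in "twistor coordinates" $(r,s,v_1,v_2)$ on the space of twistor lines, satisfied by the functions $G_i$ whose derivatives $A_i=\partial G_i/\partial r$, $B_i=\partial G_i/\partial s$ give the toric ASD conformal structure $dr\,ds+\frac{(A_2dv_1-A_1dv_2)(B_2dv_1-B_1dv_2)}{(A_2B_1-A_1B_2)^2}$ associated to data $(\tau(z)=-z,\phi)$. *)

theory Defs
  imports "HOL-Complex_Analysis.Complex_Analysis"
begin

definition twistor_G ::
  "(complex \<Rightarrow> complex) \<Rightarrow> (real \<Rightarrow> complex) \<Rightarrow> (real \<Rightarrow> complex)
   \<Rightarrow> (complex \<times> complex \<Rightarrow> complex \<Rightarrow> complex) \<Rightarrow> complex \<times> complex \<Rightarrow> complex" where
  "twistor_G \<phi> \<gamma>1 \<gamma>2 chi p =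
     - (1 / (4 * complex_of_real pi * \<i>)) *
       (contour_integral \<gamma>1 (\<lambda>z. z * \<phi> z * chi p z) +
        contour_integral \<gamma>2 (\<lambda>z. z * \<phi> z * chi p z))"

end

(*
  Differentiating under the integral sign gives dG_i/dr = -1/(4 pi i) times the integral over C of
  z phi_i(z) chi(z) / (2 (z^2 - r)), because nearby branches are related by
  chi(p,s) = chi(r,s) sqrt((z^2 - r)/(z^2 - p)), the sign being fixed by connectedness of the
  exterior and the normalisation z^2 chi -> 1 at infinity; similarly for s.  Since
  chi' = - chi z (1/(z^2 - r) + 1/(z^2 - s)), the differential equation for phi_1, phi_2 turns the
  integrand of the combination into chi - 1/2 d/dz [((a z^2 + b) phi_1 + (c z^2 + d) phi_2) chi].
  The exact term integrates to zero over each closed curve, and the integral of chi over C vanishes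
  because chi is holomorphic outside the two discs and O(|z|^-2) at infinity.
  As chi is only given continuous up to C, it is first continued holomorphically across C,
  using chi^2 (z^2 - r)(z^2 - s) = 1.
*)
theory Submission
  imports Defs
begin

section \<open>Square roots near 1\<close>

lemma norm_csqrt_add_1_ge: "1 \<le> cmod (csqrt a + 1)"
proof -
  have "1 \<le> Re (csqrt a + 1)"
    using Re_csqrt[of a] by simp
  also have "\<dots> \<le> cmod (csqrt a + 1)"
    by (rule complex_Re_le_cmod)
  finally show ?thesis .
qed

lemma norm_csqrt_diff_1_le: "cmod (csqrt a - 1) \<le> cmod (a - 1)"
proof -
  have "a - 1 = (csqrt a - 1) * (csqrt a + 1)"
    by (simp add: algebra_simps power2_eq_square[symmetric])
  then have "cmod (a - 1) = cmod (csqrt a - 1) * cmod (csqrt a + 1)"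
    by (simp add: norm_mult)
  then show ?thesis
    using norm_csqrt_add_1_ge[of a] by (metis mult_left_mono mult.right_neutral norm_ge_zero)
qed

lemma Re_pos_if_norm_diff_1_less: "cmod (a - 1) < 1 \<Longrightarrow> 0 < Re a"
  using abs_Re_le_cmod[of "a - 1"] by simp

lemma not_nonpos_Reals_if_norm_diff_1_less: "cmod (a - 1) < 1 \<Longrightarrow> a \<notin> \<real>\<^sub>\<le>\<^sub>0"
  using Re_pos_if_norm_diff_1_less by (fastforce simp: nonpos_Reals_def)

lemma csqrt_mult_near_1:
  assumes "cmod (a - 1) \<le> 1/4" "cmod (b - 1) \<le> 1/4"
  shows "csqrt a * csqrt b = csqrt (a * b)"
proof -
  let ?x = "csqrt a" and ?y = "csqrt b"
  have x: "cmod (?x - 1) \<le> 1/4" and y: "cmod (?y - 1) \<le> 1/4"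
    using norm_csqrt_diff_1_le[of a] norm_csqrt_diff_1_le[of b] assms by linarith+
  have "cmod ?y \<le> 5/4"
    using norm_triangle_ineq2[of ?y 1] y by simp
  have "cmod (?x * ?y - 1) = cmod ((?x - 1) * ?y + (?y - 1))"
    by (simp add: algebra_simps)
  also have "\<dots> \<le> cmod (?x - 1) * cmod ?y + cmod (?y - 1)"
    by (metis norm_mult norm_triangle_ineq)
  also have "\<dots> \<le> 1/4 * (5/4) + 1/4"
    using x y \<open>cmod ?y \<le> 5/4\<close> by (intro add_mono mult_mono) auto
  finally have "0 < Re (?x * ?y)"
    by (intro Re_pos_if_norm_diff_1_less) simp
  moreover have "(?x * ?y)^2 = a * b"
    by (simp add: power_mult_distrib)
  ultimately show ?thesis
    by (metis csqrt_unique)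
qed

lemma Re_divide_pos_if_near_1:
  assumes "cmod (a - 1) < 1/4" "cmod (b - 1) < 1/4"
  shows "0 < Re (a / b)"
proof -
  have "3/4 < cmod b"
    using norm_triangle_ineq2[of 1 b] assms(2) by (simp add: norm_minus_commute)
  have "cmod (a - b) \<le> cmod (a - 1) + cmod (b - 1)"
    using norm_triangle_ineq4[of "a - 1" "b - 1"] by simp
  then have "cmod (a - b) < 1/2"
    using assms by simp
  have "b \<noteq> 0"
    using \<open>3/4 < cmod b\<close> by auto
  then have "a / b - 1 = (a - b) / b"
    by (simp add: field_simps)
  then have "cmod (a / b - 1) = cmod (a - b) / cmod b"
    by (simp add: norm_divide)
  then have "cmod (a / b - 1) < 1"
    using \<open>cmod (a - b) < 1/2\<close> \<open>3/4 < cmod b\<close> by (simp add: divide_less_eq)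
  then show ?thesis
    by (rule Re_pos_if_norm_diff_1_less)
qed

lemma sqrt_eq_mult_csqrt_ratio:
  fixes x y a b :: complex
  assumes "x^2 * a = 1" "y^2 * b = 1" "cmod (x - y) < cmod y"
  shows "x = y * csqrt (b / a)"
proof -
  define c where "c = csqrt (b / a)"
  have "a \<noteq> 0"
    using assms(1) by auto
  then have "(y * c)^2 = x^2"
    using assms(1,2) by (simp add: c_def power_mult_distrib field_simps)
  then have "x = y * c \<or> x = - (y * c)"
    by (auto simp: power2_eq_iff)
  moreover have "cmod y \<le> cmod y * cmod (c + 1)"
    using norm_csqrt_add_1_ge[of "b / a"] by (simp add: c_def mult_le_cancel_left1)
  then have "cmod y \<le> cmod (y * c + y)"
    by (simp add: norm_mult[symmetric] algebra_simps)
  ultimately show ?thesis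
    using assms(3) by (auto simp: c_def algebra_simps norm_minus_commute)
qed

section \<open>Holomorphic continuation of a square root\<close>

lemma uniformly_continuous_near_compact:
  fixes f :: "'a::heine_borel \<Rightarrow> 'b::metric_space"
  assumes "closed F" "compact K" "K \<subseteq> F" "continuous_on F f" "e > 0"
  obtains d where "d > 0" "\<And>w z. w \<in> K \<Longrightarrow> z \<in> F \<Longrightarrow> dist w z < d \<Longrightarrow> dist (f z) (f w) < e"
proof -
  obtain x0 R where R: "K \<subseteq> cball x0 R"
    using compact_imp_bounded[OF assms(2)] unfolding bounded_subset_cball by blast
  define B where "B = F \<inter> cball x0 (R + 1)"
  have "compact B"
    using assms(1) by (simp add: B_def closed_Int_compact)
  then have "uniformly_continuous_on B f"
    using assms(4) by (intro compact_uniformly_continuous continuous_on_subset[OF assms(4)])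
      (auto simp: B_def)
  then obtain d0 where d0: "d0 > 0" "\<And>x x'. x \<in> B \<Longrightarrow> x' \<in> B \<Longrightarrow> dist x' x < d0 \<Longrightarrow> dist (f x') (f x) < e"
    using \<open>e > 0\<close> unfolding uniformly_continuous_on_def by metis
  have B: "z \<in> B" if "w \<in> K" "z \<in> F" "dist w z < 1" for w z
    using that R dist_triangle[of x0 z w] by (auto simp: B_def)
  show ?thesis
  proof (rule that[of "min d0 1"])
    fix w z assume "w \<in> K" "z \<in> F" "dist w z < min d0 1"
    then show "dist (f z) (f w) < e"
      using d0(2)[of w z] B[of w z] B[of w w] assms(3) by (auto simp: dist_commute)
  qed (use d0 in simp)
qed

lemma compact_norm_bounded_below:
  fixes f :: "'a::topological_space \<Rightarrow> 'b::real_normed_div_algebra"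
  assumes "compact K" "continuous_on K f" "\<And>w. w \<in> K \<Longrightarrow> f w \<noteq> 0"
  obtains \<mu> where "\<mu> > 0" "\<And>w. w \<in> K \<Longrightarrow> \<mu> \<le> norm (f w)"
proof -
  have "continuous_on K (\<lambda>w. inverse (f w))"
    using assms(2,3) by (intro continuous_intros) auto
  then obtain M where M: "M \<ge> 0" "\<And>w. w \<in> K \<Longrightarrow> norm (inverse (f w)) \<le> M"
    using continuous_on_compact_bound[OF assms(1)] by blast
  show ?thesis
  proof (rule that[of "inverse (M + 1)"])
    fix w assume "w \<in> K"
    then have "inverse (norm (f w)) \<le> inverse (inverse (M + 1))"
      using M(2)[of w] by (simp add: norm_inverse)
    moreover have "0 < norm (f w)"
      using assms(3) \<open>w \<in> K\<close> by simp
    ultimately show "inverse (M + 1) \<le> norm (f w)"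
      by (rule inverse_le_imp_le)
  qed (use M in simp)
qed

lemma ratio_near_1_near_compact:
  fixes q :: "'a::heine_borel \<Rightarrow> 'b::real_normed_field"
  assumes "compact K" "continuous_on UNIV q" "\<And>w. w \<in> K \<Longrightarrow> q w \<noteq> 0" "e > 0"
  obtains d where "d > 0" "\<And>w z. w \<in> K \<Longrightarrow> dist w z < d \<Longrightarrow> q z \<noteq> 0 \<and> norm (q w / q z - 1) < e"
proof -
  obtain m where m: "m > 0" "\<And>w. w \<in> K \<Longrightarrow> m \<le> norm (q w)"
    using compact_norm_bounded_below[OF assms(1) continuous_on_subset[OF assms(2)] assms(3)] by blast
  obtain d where d: "d > 0" "\<And>w z. w \<in> K \<Longrightarrow> dist w z < d \<Longrightarrow> dist (q z) (q w) < m * min e 1 / 2"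
    using uniformly_continuous_near_compact[OF closed_UNIV assms(1) _ assms(2), of "m * min e 1 / 2"]
      m(1) \<open>e > 0\<close> by auto
  show ?thesis
  proof (rule that[OF d(1)])
    fix w z assume wz: "w \<in> K" "dist w z < d"
    have close: "norm (q w - q z) < m * min e 1 / 2"
      using d(2)[OF wz] by (simp add: dist_norm norm_minus_commute)
    have "m * min e 1 / 2 \<le> m / 2"
      using m(1) by (simp add: mult_left_le)
    moreover have "norm (q w) \<le> norm (q z) + norm (q w - q z)"
      by (metis add.commute diff_add_cancel norm_triangle_ineq)
    ultimately have qz: "m / 2 < norm (q z)"
      using close m(2)[OF wz(1)] by linarith
    then have "q z \<noteq> 0"
      using m(1) by auto
    have "m * min e 1 / 2 \<le> min e 1 * norm (q z)"
      using qz \<open>e > 0\<close> by (simp add: mult_left_mono)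
    then have "norm (q w - q z) < min e 1 * norm (q z)"
      using close by linarith
    then have "norm (q w - q z) / norm (q z) < min e 1"
      using \<open>q z \<noteq> 0\<close> by (metis pos_divide_less_eq zero_less_norm_iff)
    moreover have "norm (q w / q z - 1) = norm (q w - q z) / norm (q z)"
      using \<open>q z \<noteq> 0\<close> by (simp add: norm_divide[symmetric] diff_divide_distrib)
    ultimately have "norm (q w / q z - 1) < e"
      by simp
    then show "q z \<noteq> 0 \<and> norm (q w / q z - 1) < e"
      using \<open>q z \<noteq> 0\<close> by simp
  qed
qed

text \<open>Near K the root X is given by the explicit branches z \<mapsto> X(w) csqrt(q(w)/q(z)), w \<in> K;
  these patch together, because csqrt is multiplicative near 1, to a continuation of X across K.\<close>
locale sqrt_continuation =
  fixes E F K :: "complex set" and X q :: "complex \<Rightarrow> complex" and \<delta> :: real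
  assumes open_E: "open E" and E_subset_F: "E \<subseteq> F" and F_subset: "F \<subseteq> E \<union> K"
    and K_subset_F: "K \<subseteq> F"
    and holomorphic_X: "X holomorphic_on E" and holomorphic_q: "q holomorphic_on UNIV"
    and sqrt_eq: "\<And>z. z \<in> F \<Longrightarrow> (X z)^2 * q z = 1"
    and \<delta>_pos: "\<delta> > 0"
    and ratio_near_1: "\<And>w z. w \<in> K \<Longrightarrow> dist w z < \<delta> \<Longrightarrow> q z \<noteq> 0 \<and> cmod (q w / q z - 1) < 1/4"
    and local_formula: "\<And>w z. w \<in> K \<Longrightarrow> z \<in> F \<Longrightarrow> dist w z < \<delta> \<Longrightarrow> X z = X w * csqrt (q w / q z)"
begin

definition nbhd :: "complex set" where
  "nbhd = E \<union> (\<Union>w\<in>K. ball w (\<delta>/2))"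

definition continuation :: "complex \<Rightarrow> complex" where
  "continuation z = (if z \<in> F then X z
     else let w = SOME w. w \<in> K \<and> dist w z < \<delta>/2 in X w * csqrt (q w / q z))"

lemma open_nbhd: "open nbhd"
  using open_E by (auto simp: nbhd_def)

lemma F_subset_nbhd: "F \<subseteq> nbhd"
  using F_subset \<delta>_pos by (force simp: nbhd_def)

lemma continuation_eq_local_formula:
  assumes w: "w \<in> K" "dist w z < \<delta>/2"
  shows "continuation z = X w * csqrt (q w / q z)"
proof (cases "z \<in> F")
  case True
  then show ?thesis
    using local_formula[OF w(1) True] w(2) \<delta>_pos by (simp add: continuation_def)
next
  case False
  define w' where "w' = (SOME w. w \<in> K \<and> dist w z < \<delta>/2)"
  have w': "w' \<in> K" "dist w' z < \<delta>/2"
    using someI_ex[of "\<lambda>w. w \<in> K \<and> dist w z < \<delta>/2"] w by (auto simp: w'_def)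
  have "dist w w' < \<delta>"
    using dist_triangle_less_add[OF w(2) w'(2)] by (simp add: dist_commute)
  then have "X w' = X w * csqrt (q w / q w')" and "q w' \<noteq> 0"
      and "cmod (q w / q w' - 1) < 1/4"
    using local_formula[OF w(1)] ratio_near_1[OF w(1)] w' K_subset_F by auto
  moreover have "cmod (q w' / q z - 1) < 1/4"
    using ratio_near_1[OF w'(1)] w'(2) \<delta>_pos by simp
  ultimately have "X w' * csqrt (q w' / q z) = X w * csqrt (q w / q w' * (q w' / q z))"
    by (simp add: csqrt_mult_near_1 mult.assoc)
  then show ?thesis
    unfolding continuation_def Let_def w'_def[symmetric] using False \<open>q w' \<noteq> 0\<close> by simp
qed

lemma holomorphic_on_continuation: "continuation holomorphic_on nbhd"
proof -
  have "continuation holomorphic_on E"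
    by (rule holomorphic_transform[OF holomorphic_X]) (use E_subset_F in \<open>auto simp: continuation_def\<close>)
  moreover have "continuation holomorphic_on ball w (\<delta>/2)" if w: "w \<in> K" for w
  proof (rule holomorphic_transform)
    show "(\<lambda>z. X w * csqrt (q w / q z)) holomorphic_on ball w (\<delta>/2)"
    proof (intro holomorphic_intros holomorphic_on_subset[OF holomorphic_q])
      fix z assume "z \<in> ball w (\<delta>/2)"
      then have "q z \<noteq> 0" "cmod (q w / q z - 1) < 1"
        using ratio_near_1[OF w, of z] \<delta>_pos by auto
      then show "q z \<noteq> 0" "q w / q z \<notin> \<real>\<^sub>\<le>\<^sub>0"
        using not_nonpos_Reals_if_norm_diff_1_less by blast+
    qed auto
  qed (use continuation_eq_local_formula[OF w] in auto)
  ultimately show ?thesis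
    unfolding nbhd_def using open_E by (intro holomorphic_on_Un holomorphic_on_UN_open) auto
qed

lemma continuation_sqrt_eq:
  assumes "z \<in> nbhd"
  shows "(continuation z)^2 * q z = 1"
proof (cases "z \<in> F")
  case True
  then show ?thesis
    using sqrt_eq by (simp add: continuation_def)
next
  case False
  then obtain w where w: "w \<in> K" "dist w z < \<delta>/2"
    using assms E_subset_F by (auto simp: nbhd_def)
  then have "q z \<noteq> 0"
    using ratio_near_1[OF w(1), of z] \<delta>_pos by simp
  then show ?thesis
    using continuation_eq_local_formula[OF w] sqrt_eq[of w] w(1) K_subset_F
    by (auto simp: power_mult_distrib)
qed

end

lemma holomorphic_sqrt_extension:
  assumes "closed F" "compact K" "open E" "E \<subseteq> F" "F \<subseteq> E \<union> K" "K \<subseteq> F"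
    and X: "continuous_on F X" "X holomorphic_on E" "\<And>z. z \<in> F \<Longrightarrow> (X z)^2 * q z = 1"
    and q: "q holomorphic_on UNIV"
  obtains V Y where "open V" "F \<subseteq> V" "Y holomorphic_on V" "\<And>z. z \<in> F \<Longrightarrow> Y z = X z"
    "\<And>z. z \<in> V \<Longrightarrow> (Y z)^2 * q z = 1"
proof -
  have nonzero: "X z \<noteq> 0" "q z \<noteq> 0" if "z \<in> F" for z
    using X(3)[OF that] by auto
  have "\<And>w. w \<in> K \<Longrightarrow> q w \<noteq> 0"
    using nonzero assms(6) by auto
  then obtain d1 where d1: "d1 > 0" "\<And>w z. w \<in> K \<Longrightarrow> dist w z < d1 \<Longrightarrow> q z \<noteq> 0 \<and> cmod (q w / q z - 1) < 1/4"
    using ratio_near_1_near_compact[OF assms(2) holomorphic_on_imp_continuous_on[OF q], of "1/4"]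
    by auto
  obtain \<mu> where \<mu>: "\<mu> > 0" "\<And>w. w \<in> K \<Longrightarrow> \<mu> \<le> cmod (X w)"
    using compact_norm_bounded_below[OF assms(2) continuous_on_subset[OF X(1) assms(6)]] nonzero assms(6)
    by blast
  obtain d2 where d2: "d2 > 0" "\<And>w z. w \<in> K \<Longrightarrow> z \<in> F \<Longrightarrow> dist w z < d2 \<Longrightarrow> dist (X z) (X w) < \<mu>"
    using uniformly_continuous_near_compact[OF assms(1,2,6) X(1) \<mu>(1)] by blast
  interpret sqrt_continuation E F K X q "min d1 d2"
  proof
    fix w z assume wz: "w \<in> K" "z \<in> F" "dist w z < min d1 d2"
    then have "cmod (X z - X w) < cmod (X w)"
      using d2(2)[of w z] \<mu>(2)[of w] by (simp add: dist_norm)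
    then show "X z = X w * csqrt (q w / q z)"
      using X(3) wz assms(6) by (intro sqrt_eq_mult_csqrt_ratio) auto
  next
    fix w z assume "w \<in> K" "dist w z < min d1 d2"
    then show "q z \<noteq> 0 \<and> cmod (q w / q z - 1) < 1/4"
      using d1(2) by simp
  qed (use assms(3-6) X(2,3) q d1(1) d2(1) in simp_all)
  show ?thesis
    by (rule that[OF open_nbhd F_subset_nbhd holomorphic_on_continuation _ continuation_sqrt_eq])
      (simp add: continuation_def)
qed

section \<open>Integrals over two loops\<close>

lemma loop_sum_as_loop:
  assumes V: "open V" "connected V"
    and \<gamma>1: "valid_path \<gamma>1" "pathfinish \<gamma>1 = pathstart \<gamma>1" "path_image \<gamma>1 \<subseteq> V"
    and \<gamma>2: "valid_path \<gamma>2" "pathfinish \<gamma>2 = pathstart \<gamma>2" "path_image \<gamma>2 \<subseteq> V"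
  obtains \<Gamma> where "valid_path \<Gamma>" "pathfinish \<Gamma> = pathstart \<Gamma>" "path_image \<Gamma> \<subseteq> V"
    "\<And>f. f holomorphic_on V \<Longrightarrow> contour_integral \<Gamma> f = contour_integral \<gamma>1 f + contour_integral \<gamma>2 f"
    "\<And>w. w \<notin> V \<Longrightarrow> winding_number \<Gamma> w = winding_number \<gamma>1 w + winding_number \<gamma>2 w"
proof -
  obtain L where L: "polynomial_function L" "path_image L \<subseteq> V"
    "pathstart L = pathstart \<gamma>1" "pathfinish L = pathstart \<gamma>2"
    using connected_open_polynomial_connected[OF V, of "pathstart \<gamma>1" "pathstart \<gamma>2"]
      \<gamma>1(3) \<gamma>2(3) pathstart_in_path_image by blast
  have "valid_path L"
    using L(1) by (rule valid_path_polynomial_function)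
  have ends: "pathfinish \<gamma>1 = pathstart L" "pathfinish L = pathstart \<gamma>2"
    "pathfinish \<gamma>2 = pathstart (reversepath L)"
    using L \<gamma>1 \<gamma>2 by simp_all
  define \<Gamma> where "\<Gamma> = \<gamma>1 +++ (L +++ (\<gamma>2 +++ reversepath L))"
  show ?thesis
  proof (rule that[of \<Gamma>])
    show "valid_path \<Gamma>"
      unfolding \<Gamma>_def using \<gamma>1(1) \<gamma>2(1) \<open>valid_path L\<close> ends
      by (simp add: valid_path_join)
    show "pathfinish \<Gamma> = pathstart \<Gamma>"
      using L(3) by (simp add: \<Gamma>_def)
    show "path_image \<Gamma> \<subseteq> V"
      unfolding \<Gamma>_def using \<gamma>1(3) \<gamma>2(3) L(2) ends by (simp add: path_image_join)
  next
    fix f assume "f holomorphic_on V"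
    then have integral: "(f has_contour_integral contour_integral g f) g"
      if "valid_path g" "path_image g \<subseteq> V" for g
      using contour_integrable_holomorphic_simple V(1) that has_contour_integral_integral by blast
    have "(f has_contour_integral
        (contour_integral \<gamma>1 f + (contour_integral L f + (contour_integral \<gamma>2 f + - contour_integral L f)))) \<Gamma>"
      unfolding \<Gamma>_def using \<gamma>1(1,3) \<gamma>2(1,3) L(2) \<open>valid_path L\<close> ends
      by (intro has_contour_integral_join has_contour_integral_reversepath integral valid_path_join)
        simp_all
    then show "contour_integral \<Gamma> f = contour_integral \<gamma>1 f + contour_integral \<gamma>2 f"
      by (simp add: contour_integral_unique)
  next
    fix w assume "w \<notin> V"
    then have "w \<notin> path_image g" if "path_image g \<subseteq> V" for g :: "real \<Rightarrow> complex"
      using that by blast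
    then show "winding_number \<Gamma> w = winding_number \<gamma>1 w + winding_number \<gamma>2 w"
      unfolding \<Gamma>_def using \<gamma>1(1,3) \<gamma>2(1,3) L(2) \<open>valid_path L\<close> ends
      by (simp add: valid_path_imp_path winding_number_join winding_number_reversepath path_image_join)
  qed
qed

lemma contour_integral_loops_cancel:
  assumes V: "open V" "connected V" and f: "f holomorphic_on V"
    and \<gamma>1: "valid_path \<gamma>1" "pathfinish \<gamma>1 = pathstart \<gamma>1" "path_image \<gamma>1 \<subseteq> V"
    and \<gamma>2: "valid_path \<gamma>2" "pathfinish \<gamma>2 = pathstart \<gamma>2" "path_image \<gamma>2 \<subseteq> V"
    and winding: "\<And>w. w \<notin> V \<Longrightarrow> winding_number \<gamma>1 w + winding_number \<gamma>2 w = 0"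
  shows "contour_integral \<gamma>1 f + contour_integral \<gamma>2 f = 0"
proof -
  obtain \<Gamma> where \<Gamma>: "valid_path \<Gamma>" "pathfinish \<Gamma> = pathstart \<Gamma>" "path_image \<Gamma> \<subseteq> V"
    "\<And>f. f holomorphic_on V \<Longrightarrow> contour_integral \<Gamma> f = contour_integral \<gamma>1 f + contour_integral \<gamma>2 f"
    "\<And>w. w \<notin> V \<Longrightarrow> winding_number \<Gamma> w = winding_number \<gamma>1 w + winding_number \<gamma>2 w"
    using loop_sum_as_loop[OF V \<gamma>1 \<gamma>2] by blast
  have "(f has_contour_integral 0) \<Gamma>"
    using Cauchy_theorem_global[OF V(1) f \<Gamma>(1-3)] \<Gamma>(5) winding by simp
  then show ?thesis
    using \<Gamma>(4)[OF f] by (simp add: contour_integral_unique)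
qed

lemma norm_contour_integral_circlepath_decay:
  assumes "f holomorphic_on V" "open V" "sphere 0 R \<subseteq> V" "R > 0" "R0 \<le> R"
    and decay: "\<And>z. R0 \<le> norm z \<Longrightarrow> norm (f z) \<le> C / (norm z)^2"
  shows "norm (contour_integral (circlepath 0 R) f) \<le> C / R^2 * (2 * pi * R)"
proof -
  have "f contour_integrable_on circlepath 0 R"
    using assms(1-4) by (intro contour_integrable_holomorphic_simple[of _ V]) (auto simp: path_image_circlepath)
  then show ?thesis
  proof (rule has_contour_integral_bound_circlepath[OF has_contour_integral_integral])
    have "norm (f (of_real R)) \<le> C / R^2"
      using decay[of "of_real R"] assms(4,5) by simp
    then show "0 \<le> C / R^2"
      using norm_ge_zero order_trans by blast
    fix z :: complex assume "norm (z - 0) = R"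
    then show "norm (f z) \<le> C / R^2"
      using decay[of z] assms(5) by simp
  qed (use assms(4) in simp)
qed

text \<open>The loops turn once clockwise around the complement of V, so together with a large
  anticlockwise circle they bound; the integral over that circle is O(1/R).\<close>
lemma contour_integral_loops_eq_0_if_decay:
  assumes V: "open V" "connected V" "bounded (- V)" and f: "f holomorphic_on V"
    and \<gamma>1: "valid_path \<gamma>1" "pathfinish \<gamma>1 = pathstart \<gamma>1" "path_image \<gamma>1 \<subseteq> V"
    and \<gamma>2: "valid_path \<gamma>2" "pathfinish \<gamma>2 = pathstart \<gamma>2" "path_image \<gamma>2 \<subseteq> V"
    and winding: "\<And>w. w \<notin> V \<Longrightarrow> winding_number \<gamma>1 w + winding_number \<gamma>2 w = -1"
    and decay: "\<And>z. R0 \<le> norm z \<Longrightarrow> norm (f z) \<le> C / (norm z)^2"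
  shows "contour_integral \<gamma>1 f + contour_integral \<gamma>2 f = 0"
proof -
  define I where "I = contour_integral \<gamma>1 f + contour_integral \<gamma>2 f"
  obtain b where b: "\<And>w. w \<notin> V \<Longrightarrow> norm w \<le> b"
    using V(3) unfolding bounded_iff by auto
  obtain \<Gamma> where \<Gamma>: "valid_path \<Gamma>" "pathfinish \<Gamma> = pathstart \<Gamma>" "path_image \<Gamma> \<subseteq> V"
    "\<And>f. f holomorphic_on V \<Longrightarrow> contour_integral \<Gamma> f = contour_integral \<gamma>1 f + contour_integral \<gamma>2 f"
    "\<And>w. w \<notin> V \<Longrightarrow> winding_number \<Gamma> w = winding_number \<gamma>1 w + winding_number \<gamma>2 w"
    using loop_sum_as_loop[OF V(1,2) \<gamma>1 \<gamma>2] by blast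
  have bound: "norm I \<le> C / R^2 * (2 * pi * R)" if R: "R > max 0 (max b R0)" for R
  proof -
    have "sphere 0 R \<subseteq> V"
      using b R by fastforce
    then have circle: "valid_path (circlepath 0 R)" "path_image (circlepath 0 R) \<subseteq> V"
      using R by (auto simp: path_image_circlepath)
    have "winding_number (circlepath 0 R) w = 1" if "w \<notin> V" for w
      using b[OF that] R by (intro winding_number_circlepath) auto
    then have "contour_integral \<Gamma> f + contour_integral (circlepath 0 R) f = 0"
      using \<Gamma> winding circle
      by (intro contour_integral_loops_cancel[OF V(1,2) f]) auto
    then have "I = - contour_integral (circlepath 0 R) f"
      using \<Gamma>(4)[OF f] by (simp add: I_def eq_neg_iff_add_eq_0)
    moreover have "norm (contour_integral (circlepath 0 R) f) \<le> C / R^2 * (2 * pi * R)"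
      using R by (intro norm_contour_integral_circlepath_decay[OF f V(1) \<open>sphere 0 R \<subseteq> V\<close> _ _ decay]) auto
    ultimately show ?thesis
      by simp
  qed
  have "((\<lambda>R. C / R^2 * (2 * pi * R)) \<longlongrightarrow> 0) at_top"
  proof -
    have "((\<lambda>R. 2 * pi * C / R) \<longlongrightarrow> 0) at_top"
      by (intro tendsto_divide_0[OF tendsto_const] filterlim_at_top_imp_at_infinity filterlim_ident)
    then show ?thesis
      by (rule Lim_transform_eventually) (auto simp: eventually_at_top_dense power2_eq_square intro!: exI[of _ 0])
  qed
  moreover have "\<forall>\<^sub>F R in at_top. norm I \<le> C / R^2 * (2 * pi * R)"
    using eventually_gt_at_top[of "max 0 (max b R0)"] by eventually_elim (rule bound)
  ultimately have "norm I \<le> 0"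
    by (rule tendsto_lowerbound) simp
  then show ?thesis
    by (simp add: I_def)
qed

section \<open>Differentiating a contour integral of a branch\<close>

lemma polynomial_path_with_same_integrals:
  assumes S: "open S" and g: "valid_path g" and pag: "path_image g \<subseteq> S"
  obtains p B where "valid_path p" "path_image p \<subseteq> S"
    "\<And>t. t \<in> {0..1} \<Longrightarrow> norm (vector_derivative p (at t)) \<le> B"
    "\<And>f. f holomorphic_on S \<Longrightarrow> contour_integral g f = contour_integral p f"
proof -
  obtain d where d: "d > 0" and nearby: "\<forall>g' h. valid_path g' \<and> valid_path h \<and>
      (\<forall>t\<in>{0..1}. norm (g' t - g t) < d \<and> norm (h t - g t) < d) \<and>
      pathstart h = pathstart g' \<and> pathfinish h = pathfinish g' \<longrightarrow>
      path_image g' \<subseteq> S \<and> path_image h \<subseteq> S \<and>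
      (\<forall>f. f holomorphic_on S \<longrightarrow> contour_integral h f = contour_integral g' f)"
    using contour_integral_nearby_ends[OF S valid_path_imp_path[OF g] pag] by blast
  obtain p where p: "polynomial_function p" "pathstart p = pathstart g" "pathfinish p = pathfinish g"
    "\<And>t. t \<in> {0..1} \<Longrightarrow> norm (p t - g t) < d"
    using path_approx_polynomial_function[OF valid_path_imp_path[OF g] d] by blast
  have "valid_path p"
    using p(1) by (rule valid_path_polynomial_function)
  then have same: "path_image p \<subseteq> S \<and> (\<forall>f. f holomorphic_on S \<longrightarrow> contour_integral p f = contour_integral g f)"
    using nearby[rule_format, of g p] g p d by auto
  obtain p' where p': "polynomial_function p'" "\<And>t. (p has_vector_derivative p' t) (at t)"
    using has_vector_derivative_polynomial_function[OF p(1)] by blast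
  obtain B where B: "\<And>t. t \<in> {0..1} \<Longrightarrow> norm (p' t) \<le> B"
    using continuous_on_compact_bound[OF compact_Icc continuous_on_polymonial_function[OF p'(1)]] by blast
  show ?thesis
  proof (rule that[of p B])
    show "norm (vector_derivative p (at t)) \<le> B" if "t \<in> {0..1}" for t
      using B[OF that] by (simp add: vector_derivative_at[OF p'(2)])
  qed (use \<open>valid_path p\<close> same in auto)
qed

lemma contour_integral_diff_quotient:
  assumes "f contour_integrable_on g" "h contour_integrable_on g"
  shows "contour_integral g (\<lambda>z. (f z - h z) / c) = (contour_integral g f - contour_integral g h) / c"
  using assms by (simp add: contour_integral_div contour_integrable_diff contour_integral_diff)

lemma contour_integral_has_field_derivative_param:
  fixes f :: "complex \<Rightarrow> complex \<Rightarrow> complex"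
  assumes S: "open S" and g: "valid_path g" and pag: "path_image g \<subseteq> S" and \<rho>: "\<rho> > 0"
    and hol: "\<And>p. p \<in> ball p0 \<rho> \<Longrightarrow> f p holomorphic_on S"
    and holl: "l holomorphic_on S"
    and ul: "\<And>K. compact K \<Longrightarrow> K \<subseteq> S \<Longrightarrow> uniform_limit K (\<lambda>p z. (f p z - f p0 z) / (p - p0)) l (at p0)"
  shows "((\<lambda>p. contour_integral g (f p)) has_field_derivative contour_integral g l) (at p0)"
proof -
  obtain \<pi> B where \<pi>: "valid_path \<pi>" "path_image \<pi> \<subseteq> S"
    "\<And>t. t \<in> {0..1} \<Longrightarrow> norm (vector_derivative \<pi> (at t)) \<le> B"
    "\<And>f. f holomorphic_on S \<Longrightarrow> contour_integral g f = contour_integral \<pi> f"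
    using polynomial_path_with_same_integrals[OF S g pag] by blast
  have p0: "p0 \<in> ball p0 \<rho>"
    using \<rho> by simp
  have hq: "(\<lambda>z. (f p z - f p0 z) / (p - p0)) holomorphic_on S" if "p \<in> ball p0 \<rho>" for p
    using holomorphic_on_mult[OF holomorphic_on_diff[OF hol[OF that] hol[OF p0]] holomorphic_on_const[of "inverse (p - p0)"]]
    unfolding divide_inverse .
  have ev: "eventually (\<lambda>p. (\<lambda>z. (f p z - f p0 z) / (p - p0)) contour_integrable_on \<pi>) (at p0)"
  proof -
    have "eventually (\<lambda>p. p \<in> ball p0 \<rho>) (at p0)"
      using \<rho> by (intro eventually_at_in_open') auto
    then show ?thesis
      by eventually_elim (rule contour_integrable_holomorphic_simple[OF hq S \<pi>(1,2)])
  qed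
  have cpi: "compact (path_image \<pi>)"
    using \<pi>(1) by (intro compact_path_image valid_path_imp_path)
  have lim: "((\<lambda>p. contour_integral \<pi> (\<lambda>z. (f p z - f p0 z) / (p - p0))) \<longlongrightarrow> contour_integral \<pi> l) (at p0)"
    by (rule contour_integral_uniform_limit(2)[OF ev ul[OF cpi \<pi>(2)] \<pi>(3) \<pi>(1)]) auto
  have eq: "eventually (\<lambda>p. contour_integral \<pi> (\<lambda>z. (f p z - f p0 z) / (p - p0)) =
      (contour_integral g (f p) - contour_integral g (f p0)) / (p - p0)) (at p0)"
  proof -
    have "eventually (\<lambda>p. p \<in> ball p0 \<rho>) (at p0)"
      using \<rho> by (intro eventually_at_in_open') auto
    then show ?thesis
    proof eventually_elim
      case (elim p)
      have "f p contour_integrable_on g" "f p0 contour_integrable_on g"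
        using contour_integrable_holomorphic_simple[OF hol S g pag] elim p0 by blast+
      then show ?case
        using \<pi>(4)[OF hq[OF elim]] by (simp add: contour_integral_diff_quotient)
    qed
  qed
  have "((\<lambda>p. (contour_integral g (f p) - contour_integral g (f p0)) / (p - p0)) \<longlongrightarrow> contour_integral g l) (at p0)"
    using Lim_transform_eventually[OF lim eq] \<pi>(4)[OF holl] by simp
  then show ?thesis
    by (simp add: has_field_derivative_iff)
qed

lemma sqrt_diff_quotient_identity:
  fixes c w :: complex
  assumes "w \<noteq> 0" "c \<noteq> 0" "c + 1 \<noteq> 0" "c^2 \<noteq> 1"
  shows "(c - 1) / ((c^2 - 1) * w) - 1 / (2 * (w * c^2))
    = (c^2 - 1) * (2 - 1 / (c + 1)) / (2 * (c + 1) * (w * c^2))"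
proof -
  have "c - 1 \<noteq> 0"
    using assms(4) by auto
  have sq: "c^2 - 1 = (c - 1) * (c + 1)"
    by (simp add: algebra_simps power2_eq_square)
  have "2 - 1 / (c + 1) = (2 * c + 1) / (c + 1)"
    using assms(3) by (simp add: field_simps)
  moreover have "2 + c * 2 \<noteq> 0"
    using assms(3) by (metis distrib_left mult.commute mult_eq_0_iff mult_1 add.commute zero_neq_numeral)
  ultimately show ?thesis
    unfolding sq using assms(1-3) \<open>c - 1 \<noteq> 0\<close>
    by (simp add: divide_simps) (simp add: algebra_simps power2_eq_square)
qed

text \<open>Writing c for the principal root of (u - p0)/(u - p), both p - p0 and u - p0 are
  multiples of u - p by c^2 - 1 and c^2, which turns the quotient into the identity above.\<close>
lemma csqrt_ratio_diff_quotient_estimate: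
  fixes u p p0 :: complex
  assumes \<eta>: "\<eta> > 0" "\<eta> \<le> cmod (u - p0)" and p: "cmod (p - p0) \<le> \<eta>/2" "p \<noteq> p0"
  shows "cmod ((csqrt ((u - p0) / (u - p)) - 1) / (p - p0) - 1 / (2 * (u - p0)))
    \<le> 3 * cmod (p - p0) / \<eta>^2"
proof -
  define w where "w = u - p"
  have "cmod (u - p0) \<le> cmod w + cmod (p - p0)"
    unfolding w_def by (metis diff_add_cancel add_diff_eq norm_triangle_ineq)
  then have w: "\<eta>/2 \<le> cmod w" "w \<noteq> 0"
    using \<eta> p by auto
  define c where "c = csqrt ((u - p0) / w)"
  have c2: "c^2 = 1 + (p - p0) / w"
    using w(2) by (simp add: c_def w_def field_simps)
  have c1: "1 \<le> cmod (c + 1)"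
    unfolding c_def by (rule norm_csqrt_add_1_ge)
  have up0: "u - p0 = w * c^2" and pp0: "p - p0 = (c^2 - 1) * w"
    using w(2) by (simp_all add: c2 w_def field_simps)
  have "c \<noteq> 0" "c + 1 \<noteq> 0" "c^2 \<noteq> 1"
    using up0 \<eta> c1 p(2) w(2) c2 by auto
  then have "(c - 1) / (p - p0) - 1 / (2 * (u - p0))
      = (c^2 - 1) * (2 - 1 / (c + 1)) / (2 * (c + 1) * (u - p0))"
    using sqrt_diff_quotient_identity[OF w(2)] by (simp add: up0 pp0)
  then have "cmod ((c - 1) / (p - p0) - 1 / (2 * (u - p0)))
      = cmod (c^2 - 1) * cmod (2 - 1 / (c + 1)) / (2 * cmod (c + 1) * cmod (u - p0))"
    by (simp only: norm_mult norm_divide norm_numeral)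
  also have "\<dots> \<le> (cmod (p - p0) / (\<eta>/2)) * 3 / (2 * 1 * \<eta>)"
  proof (intro frac_le mult_mono)
    show "cmod (c^2 - 1) \<le> cmod (p - p0) / (\<eta>/2)"
      using w \<eta> by (simp add: c2 norm_divide frac_le del: divide_divide_eq_right)
    have "cmod (1 / (c + 1)) \<le> 1"
      using c1 by (simp add: norm_divide divide_le_eq_1)
    then show "cmod (2 - 1 / (c + 1)) \<le> 3"
      using norm_triangle_ineq4[of 2 "1 / (c + 1)"] by simp
  qed (use c1 \<eta> in auto)
  also have "\<dots> = 3 * cmod (p - p0) / \<eta>^2"
    by (simp add: power2_eq_square)
  finally show ?thesis
    by (simp add: c_def w_def)
qed

lemma uniform_limit_csqrt_ratio_diff_quotient:
  fixes A u :: "'a::topological_space \<Rightarrow> complex"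
  assumes "compact K" "continuous_on K A" "\<eta> > 0" "\<And>z. z \<in> K \<Longrightarrow> \<eta> \<le> cmod (u z - p0)"
  shows "uniform_limit K
    (\<lambda>p z. (A z * csqrt ((u z - p0) / (u z - p)) - A z * csqrt ((u z - p0) / (u z - p0))) / (p - p0))
    (\<lambda>z. A z / (2 * (u z - p0))) (at p0)"
  unfolding uniform_limit_iff
proof (intro allI impI)
  fix e :: real assume "e > 0"
  obtain M where M: "M \<ge> 0" "\<And>z. z \<in> K \<Longrightarrow> cmod (A z) \<le> M"
    using continuous_on_compact_bound[OF assms(1,2)] by blast
  define d where "d = min (\<eta>/2) (e * \<eta>^2 / (3 * (M + 1)))"
  have "d > 0"
    using assms(3) \<open>e > 0\<close> M(1) by (simp add: d_def)
  moreover have "dist ((A z * csqrt ((u z - p0) / (u z - p)) - A z * csqrt ((u z - p0) / (u z - p0))) / (p - p0))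
      (A z / (2 * (u z - p0))) < e"
    if p: "p \<noteq> p0" "dist p p0 < d" and z: "z \<in> K" for p z
  proof -
    have "u z - p0 \<noteq> 0"
      using assms(3) assms(4)[OF z] by auto
    then have "(A z * csqrt ((u z - p0) / (u z - p)) - A z * csqrt ((u z - p0) / (u z - p0))) / (p - p0)
        - A z / (2 * (u z - p0))
        = A z * ((csqrt ((u z - p0) / (u z - p)) - 1) / (p - p0) - 1 / (2 * (u z - p0)))"
      by (simp add: field_simps)
    moreover have "cmod ((csqrt ((u z - p0) / (u z - p)) - 1) / (p - p0) - 1 / (2 * (u z - p0)))
        \<le> 3 * cmod (p - p0) / \<eta>^2"
      using p assms(3) assms(4)[OF z] by (intro csqrt_ratio_diff_quotient_estimate) (auto simp: d_def dist_norm)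
    then have "cmod (A z * ((csqrt ((u z - p0) / (u z - p)) - 1) / (p - p0) - 1 / (2 * (u z - p0))))
        \<le> (M + 1) * (3 * cmod (p - p0) / \<eta>^2)"
      unfolding norm_mult using M(1) M(2)[OF z] by (intro mult_mono) auto
    moreover have "cmod (p - p0) < e * \<eta>^2 / (3 * (M + 1))"
      using p(2) by (simp add: d_def dist_norm)
    then have "(M + 1) * (3 * cmod (p - p0) / \<eta>^2) < e"
      using assms(3) M(1) by (simp add: field_simps)
    ultimately show ?thesis
      by (simp add: dist_norm)
  qed
  ultimately show "\<forall>\<^sub>F p in at p0. \<forall>z\<in>K. dist
      ((A z * csqrt ((u z - p0) / (u z - p)) - A z * csqrt ((u z - p0) / (u z - p0))) / (p - p0))
      (A z / (2 * (u z - p0))) < e"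
    unfolding eventually_at by blast
qed

lemma csqrt_ratio_holomorphic:
  assumes "u holomorphic_on S" "\<And>z. z \<in> S \<Longrightarrow> cmod (p - p0) < cmod (u z - p)"
  shows "(\<lambda>z. csqrt ((u z - p0) / (u z - p))) holomorphic_on S"
proof (intro holomorphic_intros assms(1))
  fix z assume "z \<in> S"
  then show "u z - p \<noteq> 0"
    using assms(2) by force
  then have "(u z - p0) / (u z - p) - 1 = (p - p0) / (u z - p)"
    by (simp add: field_simps)
  then show "(u z - p0) / (u z - p) \<notin> \<real>\<^sub>\<le>\<^sub>0"
    using assms(2)[OF \<open>z \<in> S\<close>] \<open>u z - p \<noteq> 0\<close>
    by (intro not_nonpos_Reals_if_norm_diff_1_less) (simp add: norm_divide divide_less_eq)
qed

lemma continuous_square_roots_eq: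
  fixes f g :: "'a::topological_space \<Rightarrow> 'b::real_normed_field"
  assumes "connected F" "continuous_on F f" "continuous_on F g"
    and "\<And>z. z \<in> F \<Longrightarrow> (f z)^2 = (g z)^2" "\<And>z. z \<in> F \<Longrightarrow> g z \<noteq> 0"
    and "z0 \<in> F" "f z0 = g z0" "z \<in> F"
  shows "f z = g z"
proof -
  define h where "h z = f z / g z" for z
  have h: "h z = 1 \<or> h z = -1" if "z \<in> F" for z
  proof -
    have "(h z)^2 = 1"
      using assms(4,5)[OF that] by (simp add: h_def power_divide)
    then show ?thesis
      by (simp add: power2_eq_1_iff)
  qed
  have "continuous_on F h"
    unfolding h_def using assms(2,3,5) by (intro continuous_intros) auto
  then have "h constant_on F"
  proof (rule continuous_discrete_range_constant[OF assms(1)])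
    fix x assume "x \<in> F"
    have "1 \<le> norm (h y - h x)" if "y \<in> F \<and> h y \<noteq> h x" for y
    proof -
      have "h y - h x = 2 \<or> h y - h x = -2"
        using h[of x] h[of y] \<open>x \<in> F\<close> that by auto
      then show ?thesis
        by (auto simp: norm_numeral)
    qed
    then show "\<exists>e>0. \<forall>y. y \<in> F \<and> h y \<noteq> h x \<longrightarrow> e \<le> norm (h y - h x)"
      by (intro exI[of _ 1]) auto
  qed
  then have "h z = h z0"
    using assms(6,8) by (auto simp: constant_on_def)
  then show ?thesis
    using assms(5)[OF assms(6)] assms(5)[OF assms(8)] assms(7) by (simp add: h_def field_simps)
qed

lemma normalised_at_infinity_not_opposite:
  fixes X0 X1 Y :: "complex \<Rightarrow> complex"
  assumes "\<And>z. R \<le> norm z \<Longrightarrow> z \<in> F"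
    and "((\<lambda>z. z^2 * X0 z) \<longlongrightarrow> 1) at_infinity" "((\<lambda>z. z^2 * X1 z) \<longlongrightarrow> 1) at_infinity"
    and "\<And>z. 0 \<le> Re (Y z)"
  obtains z0 where "z0 \<in> F" "X1 z0 \<noteq> - (X0 z0 * Y z0)"
proof -
  have "\<forall>\<^sub>F z in at_infinity. z \<in> F"
    unfolding eventually_at_infinity using assms(1) by blast
  moreover have "\<forall>\<^sub>F z in at_infinity. cmod (z^2 * X0 z - 1) < 1/4"
    using tendstoD[OF assms(2), of "1/4"] by (simp add: dist_norm)
  moreover have "\<forall>\<^sub>F z in at_infinity. cmod (z^2 * X1 z - 1) < 1/4"
    using tendstoD[OF assms(3), of "1/4"] by (simp add: dist_norm)
  ultimately have "\<forall>\<^sub>F z in at_infinity. z \<in> F \<and> cmod (z^2 * X0 z - 1) < 1/4 \<and> cmod (z^2 * X1 z - 1) < 1/4"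
    by eventually_elim blast
  then obtain z0 where z0: "z0 \<in> F" "cmod (z0^2 * X0 z0 - 1) < 1/4" "cmod (z0^2 * X1 z0 - 1) < 1/4"
    using eventually_happens'[OF trivial_limit_at_infinity] by blast
  have "X1 z0 \<noteq> - (X0 z0 * Y z0)"
  proof
    assume minus: "X1 z0 = - (X0 z0 * Y z0)"
    have "0 < Re ((z0^2 * X1 z0) / (z0^2 * X0 z0))"
      using z0 by (intro Re_divide_pos_if_near_1)
    moreover have "z0^2 * X0 z0 \<noteq> 0"
      using z0(2) by auto
    ultimately have "Re (Y z0) < 0"
      using minus by simp
    then show False
      using assms(4)[of z0] by linarith
  qed
  then show ?thesis
    using that z0(1) by blast
qed

text \<open>X1/X0 is a continuous square root of (z^2 - p0)/(z^2 - p), a function with values near 1,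
  on the connected set F, so it is plus or minus the principal root; the normalisation at
  infinity fixes the sign.\<close>
lemma branch_eq_mult_csqrt_ratio:
  fixes X0 X1 m :: "complex \<Rightarrow> complex"
  assumes F: "connected F" "\<And>z. R \<le> norm z \<Longrightarrow> z \<in> F"
    and sep: "\<And>z. z \<in> F \<Longrightarrow> cmod (p - p0) < cmod (z^2 - p)"
    and X0: "continuous_on F X0" "\<And>z. z \<in> F \<Longrightarrow> (X0 z)^2 * ((z^2 - p0) * m z) = 1"
      "((\<lambda>z. z^2 * X0 z) \<longlongrightarrow> 1) at_infinity"
    and X1: "continuous_on F X1" "\<And>z. z \<in> F \<Longrightarrow> (X1 z)^2 * ((z^2 - p) * m z) = 1"
      "((\<lambda>z. z^2 * X1 z) \<longlongrightarrow> 1) at_infinity"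
    and "z \<in> F"
  shows "X1 z = X0 z * csqrt ((z^2 - p0) / (z^2 - p))"
proof -
  define Y where "Y z = csqrt ((z^2 - p0) / (z^2 - p))" for z
  have nonzero: "z^2 - p \<noteq> 0" "z^2 - p0 \<noteq> 0" "m z \<noteq> 0" "X0 z \<noteq> 0" if "z \<in> F" for z
    using sep[OF that] X0(2)[OF that] by auto
  have "(\<lambda>z. z^2) holomorphic_on F"
    by (intro holomorphic_intros)
  then have "continuous_on F Y"
    unfolding Y_def by (rule holomorphic_on_imp_continuous_on[OF csqrt_ratio_holomorphic[OF _ sep]])
  then have continuous: "continuous_on F (\<lambda>z. X0 z * Y z)"
    using X0(1) by (intro continuous_intros)
  have square: "(X1 z)^2 = (X0 z * Y z)^2" if "z \<in> F" for z
  proof -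
    have "(X1 z)^2 = 1 / ((z^2 - p) * m z)" and "(X0 z)^2 = 1 / ((z^2 - p0) * m z)"
      using X0(2)[OF that] X1(2)[OF that] nonzero[OF that] by (simp_all add: field_simps)
    then show ?thesis
      using nonzero[OF that] by (simp add: Y_def power_mult_distrib)
  qed
  have "0 \<le> Re (Y z)" for z
    unfolding Y_def by (rule Re_csqrt)
  then obtain z0 where z0: "z0 \<in> F" "X1 z0 \<noteq> - (X0 z0 * Y z0)"
    using normalised_at_infinity_not_opposite[OF F(2) X0(3) X1(3)] by blast
  then have "X1 z0 = X0 z0 * Y z0"
    using square[OF z0(1)] by (auto simp: power2_eq_iff)
  then show ?thesis
    using continuous_square_roots_eq[OF F(1) X1(1) continuous square _ z0(1) _ \<open>z \<in> F\<close>] nonzero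
    by (simp add: Y_def)
qed

lemma contour_integral_branch_has_field_derivative:
  fixes B Y :: "complex \<Rightarrow> complex" and X :: "complex \<Rightarrow> complex \<Rightarrow> complex"
  assumes S: "open S" "B holomorphic_on S" "Y holomorphic_on S"
    and \<eta>: "\<eta> > 0" "\<And>z. z \<in> S \<Longrightarrow> \<eta> < cmod (z^2 - p0)"
    and \<gamma>: "valid_path \<gamma>" "path_image \<gamma> \<subseteq> S"
    and \<rho>: "\<rho> > 0" "\<rho> \<le> \<eta>/2"
    and branch: "\<And>p z. p \<in> ball p0 \<rho> \<Longrightarrow> z \<in> path_image \<gamma> \<Longrightarrow>
      X p z = Y z * csqrt ((z^2 - p0) / (z^2 - p))"
  shows "((\<lambda>p. contour_integral \<gamma> (\<lambda>z. B z * X p z)) has_field_derivative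
    contour_integral \<gamma> (\<lambda>z. B z * Y z / (2 * (z^2 - p0)))) (at p0)"
proof -
  define f where "f p z = B z * Y z * csqrt ((z^2 - p0) / (z^2 - p))" for p z
  have holomorphic_f: "f p holomorphic_on S" if p: "p \<in> ball p0 \<rho>" for p
  proof -
    have close: "cmod (p - p0) < cmod (z^2 - p)" if "z \<in> S" for z
    proof -
      have "cmod (z^2 - p0) \<le> cmod (z^2 - p) + cmod (p - p0)"
        by (metis diff_add_cancel add_diff_eq norm_triangle_ineq)
      moreover have "cmod (p - p0) < \<eta>/2"
        using p \<rho>(2) by (simp add: dist_norm norm_minus_commute)
      ultimately show ?thesis
        using \<eta>(2)[OF that] by linarith
    qed
    have "(\<lambda>z. z^2) holomorphic_on S"
      by (intro holomorphic_intros)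
    then have "(\<lambda>z. csqrt ((z^2 - p0) / (z^2 - p))) holomorphic_on S"
      using close by (rule csqrt_ratio_holomorphic)
    then show ?thesis
      unfolding f_def using S(2,3) by (intro holomorphic_on_mult)
  qed
  have "z^2 - p0 \<noteq> 0" if "z \<in> S" for z
    using \<eta>(1) \<eta>(2)[OF that] by auto
  then have holomorphic_l: "(\<lambda>z. B z * Y z / (2 * (z^2 - p0))) holomorphic_on S"
    by (intro holomorphic_intros S(2,3)) auto
  have uniform: "uniform_limit K (\<lambda>p z. (f p z - f p0 z) / (p - p0))
      (\<lambda>z. B z * Y z / (2 * (z^2 - p0))) (at p0)" if K: "compact K" "K \<subseteq> S" for K
  proof -
    have "continuous_on K (\<lambda>z. B z * Y z)"
      using holomorphic_on_subset[OF holomorphic_on_mult[OF S(2,3)] K(2)]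
      by (rule holomorphic_on_imp_continuous_on)
    moreover have "\<eta> \<le> cmod (z^2 - p0)" if "z \<in> K" for z
      using K(2) \<eta>(2) that by (meson less_imp_le subsetD)
    ultimately show ?thesis
      unfolding f_def by (rule uniform_limit_csqrt_ratio_diff_quotient[OF K(1) _ \<eta>(1)])
  qed
  have derivative: "((\<lambda>p. contour_integral \<gamma> (f p)) has_field_derivative
      contour_integral \<gamma> (\<lambda>z. B z * Y z / (2 * (z^2 - p0)))) (at p0)"
    by (rule contour_integral_has_field_derivative_param[OF S(1) \<gamma> \<rho>(1) holomorphic_f holomorphic_l uniform])
  have "contour_integral \<gamma> (f p) = contour_integral \<gamma> (\<lambda>z. B z * X p z)" if "p \<in> ball p0 \<rho>" for p
    using branch[OF that] by (intro contour_integral_eq) (simp add: f_def)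
  then show ?thesis
    using \<rho>(1) by (intro has_field_derivative_transform_within_open[OF derivative open_ball]) auto
qed

section \<open>The exterior of two disjoint Jordan curves\<close>

lemma outside_eq_compl_disc: "outside S = - (S \<union> inside S)"
  by (simp add: union_with_inside)

lemma simple_loop_disc:
  fixes g :: "real \<Rightarrow> complex"
  assumes "simple_path g" "pathfinish g = pathstart g"
  shows "compact (path_image g \<union> inside (path_image g))" "open (outside (path_image g))"
    "connected (outside (path_image g))" "frontier (outside (path_image g)) = path_image g"
proof -
  have "path g"
    using assms(1) by (rule simple_path_imp_path)
  then show "compact (path_image g \<union> inside (path_image g))"
    unfolding compact_eq_bounded_closed
    by (simp add: bounded_path_image bounded_inside closed_path_image_Un_inside)
  show "open (outside (path_image g))" "connected (outside (path_image g))"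
    "frontier (outside (path_image g)) = path_image g"
    using Jordan_inside_outside[OF assms] by simp_all
qed

locale two_loops =
  fixes \<gamma>1 \<gamma>2 :: "real \<Rightarrow> complex"
  assumes curve1: "valid_path \<gamma>1" "simple_path \<gamma>1" "pathfinish \<gamma>1 = pathstart \<gamma>1"
    and curve2: "valid_path \<gamma>2" "simple_path \<gamma>2" "pathfinish \<gamma>2 = pathstart \<gamma>2"
    and discs_disjoint:
      "(path_image \<gamma>1 \<union> inside (path_image \<gamma>1)) \<inter>
       (path_image \<gamma>2 \<union> inside (path_image \<gamma>2)) = {}"
    and orient1: "\<And>w. w \<in> inside (path_image \<gamma>1) \<Longrightarrow> winding_number \<gamma>1 w = -1"
    and orient2: "\<And>w. w \<in> inside (path_image \<gamma>2) \<Longrightarrow> winding_number \<gamma>2 w = -1"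
begin

definition outside_insides :: "complex set" where
  "outside_insides = - (inside (path_image \<gamma>1) \<union> inside (path_image \<gamma>2))"

definition outside_discs :: "complex set" where
  "outside_discs = - ((path_image \<gamma>1 \<union> inside (path_image \<gamma>1)) \<union>
                      (path_image \<gamma>2 \<union> inside (path_image \<gamma>2)))"

lemmas disc1 = simple_loop_disc[OF curve1(2,3)] and disc2 = simple_loop_disc[OF curve2(2,3)]

lemma outside_discs_eq: "outside_discs = outside (path_image \<gamma>1) \<inter> outside (path_image \<gamma>2)"
  by (simp add: outside_discs_def outside_eq_compl_disc)

lemma open_outside_discs: "open outside_discs"
  using disc1(2) disc2(2) by (simp add: outside_discs_eq open_Int)

lemma closed_outside_insides: "closed outside_insides"
  using curve1(1) curve2(1)
  by (auto simp: outside_insides_def intro!: open_inside closed_path_image valid_path_imp_path)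

lemma bounded_compl_outside_discs: "bounded (- outside_discs)"
  unfolding outside_discs_def double_compl
  by (rule compact_imp_bounded[OF compact_Un[OF disc1(1) disc2(1)]])

lemma outside_discs_subset: "outside_discs \<subseteq> outside_insides"
  by (auto simp: outside_discs_def outside_insides_def)

lemma far_in_outside_insides:
  obtains R where "\<And>z. R \<le> norm z \<Longrightarrow> z \<in> outside_insides"
proof -
  obtain R where "\<And>z. z \<in> - outside_discs \<Longrightarrow> norm z \<le> R"
    using bounded_compl_outside_discs unfolding bounded_iff by blast
  then show ?thesis
    using that[of "R + 1"] outside_discs_subset by force
qed

lemma outside_insides_subset:
  "outside_insides \<subseteq> outside_discs \<union> (path_image \<gamma>1 \<union> path_image \<gamma>2)"
  by (auto simp: outside_discs_def outside_insides_def)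

lemma path_images_subset: "path_image \<gamma>1 \<union> path_image \<gamma>2 \<subseteq> outside_insides"
  unfolding outside_insides_def
  using discs_disjoint inside_no_overlap[of "path_image \<gamma>1"] inside_no_overlap[of "path_image \<gamma>2"]
  by blast

text \<open>The closed exterior lies between the open exterior and its closure, since each boundary
  curve is the frontier of its own outside and lies in the (open) outside of the other curve.\<close>
lemma connected_outside_insides: "connected outside_insides"
proof -
  have "connected outside_discs"
    unfolding outside_discs_def
    by (rule Janiszewski_connected[OF disc1(1) compact_imp_closed[OF disc2(1)]])
      (use discs_disjoint disc1(3) disc2(3) in \<open>simp_all add: outside_eq_compl_disc\<close>)
  moreover have "outside_insides \<subseteq> closure outside_discs"
  proof
    fix x assume "x \<in> outside_insides"
    have near_curve: "x \<in> closure (outside (path_image h) \<inter> outside (path_image g))"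
      if "x \<in> frontier (outside (path_image g))" "open (outside (path_image h))"
        "x \<in> outside (path_image h)" for g h
      using that open_Int_closure_subset[OF that(2), of "outside (path_image g)"]
      by (auto simp: frontier_def)
    have "x \<in> outside_discs \<or> x \<in> path_image \<gamma>1 \<or> x \<in> path_image \<gamma>2"
      using \<open>x \<in> outside_insides\<close> outside_insides_subset by blast
    moreover have "x \<in> outside (path_image \<gamma>2)" if "x \<in> path_image \<gamma>1"
      using that discs_disjoint by (auto simp: outside_eq_compl_disc)
    moreover have "x \<in> outside (path_image \<gamma>1)" if "x \<in> path_image \<gamma>2"
      using that discs_disjoint by (auto simp: outside_eq_compl_disc)
    ultimately show "x \<in> closure outside_discs"
      using closure_subset[of outside_discs] near_curve[of \<gamma>1 \<gamma>2] near_curve[of \<gamma>2 \<gamma>1] disc1 disc2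
      by (auto simp: outside_discs_eq Int_commute)
  qed
  ultimately show ?thesis
    using outside_discs_subset connected_intermediate_closure by blast
qed

lemma winding_numbers_off_outside_insides:
  assumes "w \<notin> outside_insides"
  shows "winding_number \<gamma>1 w + winding_number \<gamma>2 w = -1"
proof -
  have "w \<in> inside (path_image \<gamma>1) \<or> w \<in> inside (path_image \<gamma>2)"
    using assms by (simp add: outside_insides_def)
  then show ?thesis
  proof
    assume "w \<in> inside (path_image \<gamma>1)"
    then have "w \<in> outside (path_image \<gamma>2)"
      using discs_disjoint by (auto simp: outside_eq_compl_disc)
    then show ?thesis
      using orient1 \<open>w \<in> inside (path_image \<gamma>1)\<close>
        winding_number_zero_in_outside[OF valid_path_imp_path[OF curve2(1)] curve2(3)] by simp
  next
    assume "w \<in> inside (path_image \<gamma>2)"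
    then have "w \<in> outside (path_image \<gamma>1)"
      using discs_disjoint by (auto simp: outside_eq_compl_disc)
    then show ?thesis
      using orient2 \<open>w \<in> inside (path_image \<gamma>2)\<close>
        winding_number_zero_in_outside[OF valid_path_imp_path[OF curve1(1)] curve1(3)] by simp
  qed
qed

end

section \<open>The twistor relation\<close>

lemma square_roots_separated:
  fixes I F :: "complex set"
  assumes "open I" "closed F" "I \<inter> F = {}"
    and roots: "\<And>p z. p \<in> cball p0 \<epsilon> \<Longrightarrow> z^2 = p \<Longrightarrow> z \<in> I"
  obtains d where "d > 0" "\<And>p z. p \<in> cball p0 \<epsilon> \<Longrightarrow> z \<in> F \<Longrightarrow> d \<le> cmod (z^2 - p)"
proof -
  define K where "K = (\<lambda>w. w^2) -` cball p0 \<epsilon>"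
  have "closed K"
    unfolding K_def by (intro closed_vimage) (auto intro!: continuous_intros)
  moreover have "norm w \<le> max 1 (cmod p0 + \<epsilon>)" if "w \<in> K" for w
  proof (cases "norm w \<le> 1")
    case False
    have "norm (w^2) \<le> cmod p0 + cmod (w^2 - p0)"
      by (metis add.commute diff_add_cancel norm_triangle_ineq)
    moreover have "cmod (w^2 - p0) \<le> \<epsilon>"
      using that by (simp add: K_def dist_norm norm_minus_commute)
    moreover have "norm w \<le> norm w * norm w"
      using False by (simp add: mult_le_cancel_left1)
    ultimately show ?thesis
      by (simp add: norm_mult power2_eq_square le_max_iff_disj)
  qed simp
  then have "bounded K"
    unfolding bounded_iff by blast
  ultimately have "compact K"
    by (simp add: compact_eq_bounded_closed)
  moreover have "K \<inter> F = {}"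
  proof -
    have "w \<in> I" if "w \<in> K" for w
      using roots[of "w^2" w] that by (simp add: K_def)
    then show ?thesis
      using assms(3) by blast
  qed
  ultimately obtain \<delta> where \<delta>: "\<delta> > 0" "\<And>x y. x \<in> K \<Longrightarrow> y \<in> F \<Longrightarrow> \<delta> \<le> dist x y"
    using separate_compact_closed[OF _ assms(2)] by metis
  show ?thesis
  proof (rule that[of "\<delta>^2"])
    fix p z assume "p \<in> cball p0 \<epsilon>" "z \<in> F"
    then have "csqrt p \<in> K" "- csqrt p \<in> K"
      by (auto simp: K_def)
    then have "\<delta> \<le> dist z (csqrt p)" "\<delta> \<le> dist z (- csqrt p)"
      using \<delta>(2)[OF _ \<open>z \<in> F\<close>] by (metis dist_commute)+
    then have "\<delta> \<le> cmod (z - csqrt p)" "\<delta> \<le> cmod (z + csqrt p)"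
      by (simp_all add: dist_norm)
    moreover have "z^2 - p = (z - csqrt p) * (z + csqrt p)"
      by (simp add: algebra_simps power2_eq_square[symmetric])
    ultimately show "\<delta>^2 \<le> cmod (z^2 - p)"
      using \<delta>(1) by (simp add: norm_mult power2_eq_square mult_mono)
  qed (use \<delta> in simp)
qed

text \<open>u stands for z^2 and R, S for z^2 - r, z^2 - s; as independent variables they let
  field_simps clear the denominators.\<close>
lemma twistor_integrand_identity:
  fixes a b c d u R S z e f1 f2 :: complex
  assumes "R \<noteq> 0" "S \<noteq> 0"
  shows "(a * (u - R) + b) * (z * f1 * e / (2 * R)) + (c * (u - R) + d) * (z * f2 * e / (2 * R))
       + (a * (u - S) + b) * (z * f1 * e / (2 * S)) + (c * (u - S) + d) * (z * f2 * e / (2 * S))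
     = e - ((2 * a * z * f1 + 2 * c * z * f2 + 2) * e
            - ((a * u + b) * f1 + (c * u + d) * f2) * e * z * (1 / R + 1 / S)) / 2"
  using assms by (simp add: field_simps)

lemma has_field_derivative_inverse_sqrt:
  fixes Y q :: "complex \<Rightarrow> complex"
  assumes "open V" "z \<in> V" "\<And>z. z \<in> V \<Longrightarrow> (Y z)^2 * q z = 1"
    and "(Y has_field_derivative Y') (at z)" "(q has_field_derivative q') (at z)"
  shows "Y' = - Y z * q' / (2 * q z)"
proof -
  have "((\<lambda>z. (Y z)^2 * q z) has_field_derivative
      of_nat 2 * (Y' * Y z ^ (2 - Suc 0)) * q z + q' * (Y z)^2) (at z)"
    by (rule DERIV_mult[OF DERIV_power[OF assms(4)] assms(5)])
  moreover have "((\<lambda>z. (Y z)^2 * q z) has_field_derivative 0) (at z)"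
    by (rule has_field_derivative_transform_within_open[OF DERIV_const assms(1,2)]) (simp add: assms(3))
  ultimately have "of_nat 2 * (Y' * Y z ^ (2 - Suc 0)) * q z + q' * (Y z)^2 = 0"
    by (rule DERIV_unique)
  moreover have "Y z \<noteq> 0" "q z \<noteq> 0"
    using assms(3)[OF assms(2)] by auto
  ultimately have "Y z * (Y' * (2 * q z) + Y z * q') = 0"
    by (simp add: algebra_simps power2_eq_square)
  then have "Y' * (2 * q z) = - (Y z * q')"
    using \<open>Y z \<noteq> 0\<close> by (simp add: eq_neg_iff_add_eq_0)
  with \<open>q z \<noteq> 0\<close> show ?thesis
    by (simp add: field_simps)
qed

locale twistor_data = two_loops \<gamma>1 \<gamma>2 for \<gamma>1 \<gamma>2 :: "real \<Rightarrow> complex" +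
  fixes a b c d :: complex and U :: "complex set" and \<phi>1 \<phi>2 :: "complex \<Rightarrow> complex"
    and W :: "(complex \<times> complex) set" and chi :: "complex \<times> complex \<Rightarrow> complex \<Rightarrow> complex"
  assumes U_open: "open U" and hol1: "\<phi>1 holomorphic_on U" and hol2: "\<phi>2 holomorphic_on U"
    and ode: "\<And>z. z \<in> U \<Longrightarrow> (a * z^2 + b) * deriv \<phi>1 z + (c * z^2 + d) * deriv \<phi>2 z = 2"
    and W_open: "open W"
    and C_in_U: "path_image \<gamma>1 \<subseteq> U" "path_image \<gamma>2 \<subseteq> U"
    and roots_r: "\<And>r s z. (r, s) \<in> W \<Longrightarrow> z^2 = r \<Longrightarrow> z \<in> inside (path_image \<gamma>1)"
    and roots_s: "\<And>r s z. (r, s) \<in> W \<Longrightarrow> z^2 = s \<Longrightarrow> z \<in> inside (path_image \<gamma>2)"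
    and chi_cont: "\<And>r s. (r, s) \<in> W \<Longrightarrow>
        continuous_on (- (inside (path_image \<gamma>1) \<union> inside (path_image \<gamma>2))) (chi (r, s))"
    and chi_hol: "\<And>r s. (r, s) \<in> W \<Longrightarrow>
        chi (r, s) holomorphic_on
          - ((path_image \<gamma>1 \<union> inside (path_image \<gamma>1)) \<union>
             (path_image \<gamma>2 \<union> inside (path_image \<gamma>2)))"
    and chi_sq: "\<And>r s z. (r, s) \<in> W \<Longrightarrow>
        z \<notin> inside (path_image \<gamma>1) \<union> inside (path_image \<gamma>2) \<Longrightarrow>
        (chi (r, s) z)^2 * ((z^2 - r) * (z^2 - s)) = 1"
    and chi_infty: "\<And>r s. (r, s) \<in> W \<Longrightarrow> ((\<lambda>z. z^2 * chi (r, s) z) \<longlongrightarrow> 1) at_infinity"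
begin

lemma chi_continuous: "(r, s) \<in> W \<Longrightarrow> continuous_on outside_insides (chi (r, s))"
  using chi_cont by (simp add: outside_insides_def)

lemma chi_holomorphic: "(r, s) \<in> W \<Longrightarrow> chi (r, s) holomorphic_on outside_discs"
  using chi_hol by (simp add: outside_discs_def)

lemma chi_sqrt_eq:
  "(r, s) \<in> W \<Longrightarrow> z \<in> outside_insides \<Longrightarrow> (chi (r, s) z)^2 * ((z^2 - r) * (z^2 - s)) = 1"
  using chi_sq by (simp add: outside_insides_def)

definition Phi :: "complex \<Rightarrow> complex" where
  "Phi z = (a * z^2 + b) * \<phi>1 z + (c * z^2 + d) * \<phi>2 z"

lemma has_field_derivative_Phi:
  assumes "z \<in> U"
  shows "(Phi has_field_derivative 2 * a * z * \<phi>1 z + 2 * c * z * \<phi>2 z + 2) (at z)"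
proof -
  have "((\<lambda>z. a * z^2 + b) has_field_derivative 2 * a * z) (at z)"
    and "((\<lambda>z. c * z^2 + d) has_field_derivative 2 * c * z) (at z)"
    by (auto intro!: derivative_eq_intros)
  moreover have "(\<phi>1 has_field_derivative deriv \<phi>1 z) (at z)" "(\<phi>2 has_field_derivative deriv \<phi>2 z) (at z)"
    using assms by (auto intro!: holomorphic_derivI[OF hol1 U_open] holomorphic_derivI[OF hol2 U_open])
  ultimately have "(Phi has_field_derivative
      2 * a * z * \<phi>1 z + deriv \<phi>1 z * (a * z^2 + b) + (2 * c * z * \<phi>2 z + deriv \<phi>2 z * (c * z^2 + d))) (at z)"
    unfolding Phi_def[abs_def] by (intro DERIV_add DERIV_mult)
  also have "2 * a * z * \<phi>1 z + deriv \<phi>1 z * (a * z^2 + b) + (2 * c * z * \<phi>2 z + deriv \<phi>2 z * (c * z^2 + d))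
      = 2 * a * z * \<phi>1 z + 2 * c * z * \<phi>2 z + 2"
    using ode[OF assms] by (simp add: algebra_simps)
  finally show ?thesis .
qed

end

text \<open>Cauchy's theorem and differentiation under the integral sign need chi(r,s) holomorphic on a
  neighbourhood of the curves, where it is only given continuous; Y is such a continuation.\<close>
locale twistor_extension = twistor_data +
  fixes r s :: complex and V :: "complex set" and Y :: "complex \<Rightarrow> complex"
  assumes rs_in_W: "(r, s) \<in> W"
    and open_V: "open V" and connected_V: "connected V"
    and outside_insides_subset_V: "outside_insides \<subseteq> V"
    and holomorphic_Y: "Y holomorphic_on V"
    and Y_eq_chi: "\<And>z. z \<in> outside_insides \<Longrightarrow> Y z = chi (r, s) z"
    and Y_sqrt_eq: "\<And>z. z \<in> V \<Longrightarrow> (Y z)^2 * ((z^2 - r) * (z^2 - s)) = 1"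

context twistor_data
begin

lemma chi_extension_exists:
  assumes "(r, s) \<in> W"
  obtains V Y where "twistor_extension \<gamma>1 \<gamma>2 a b c d U \<phi>1 \<phi>2 W chi r s V Y"
proof -
  have "compact (path_image \<gamma>1 \<union> path_image \<gamma>2)"
    using curve1(1) curve2(1) by (intro compact_Un compact_path_image valid_path_imp_path)
  moreover have "(\<lambda>z. (z^2 - r) * (z^2 - s)) holomorphic_on UNIV"
    by (intro holomorphic_intros)
  ultimately obtain V0 Y where V0: "open V0" "outside_insides \<subseteq> V0" "Y holomorphic_on V0"
    "\<And>z. z \<in> outside_insides \<Longrightarrow> Y z = chi (r, s) z"
    "\<And>z. z \<in> V0 \<Longrightarrow> (Y z)^2 * ((z^2 - r) * (z^2 - s)) = 1"
    using holomorphic_sqrt_extension[OF closed_outside_insides _ open_outside_discs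
        outside_discs_subset outside_insides_subset path_images_subset
        chi_continuous[OF assms] chi_holomorphic[OF assms] chi_sqrt_eq[OF assms]]
    by metis
  obtain R where R: "\<And>z. R \<le> norm z \<Longrightarrow> z \<in> outside_insides"
    using far_in_outside_insides by blast
  define V where "V = connected_component_set V0 (of_real \<bar>R\<bar>)"
  have "outside_insides \<subseteq> V"
    unfolding V_def using R[of "of_real \<bar>R\<bar>"] V0(2)
    by (intro connected_component_maximal connected_outside_insides) auto
  moreover have "V \<subseteq> V0"
    by (simp add: V_def connected_component_subset)
  ultimately show ?thesis
    using V0 holomorphic_on_subset[OF V0(3)] assms
    by (intro that[of V Y] twistor_extension.intro twistor_data_axioms twistor_extension_axioms.intro)
      (auto simp: V_def open_connected_component)
qed

end

context twistor_extension
begin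

lemma nonzero_on_V:
  assumes "z \<in> V"
  shows "z^2 - r \<noteq> 0" "z^2 - s \<noteq> 0"
  using Y_sqrt_eq[OF assms] by auto

lemma has_field_derivative_Y:
  assumes "z \<in> V"
  shows "(Y has_field_derivative - Y z * z * (1 / (z^2 - r) + 1 / (z^2 - s))) (at z)"
proof -
  have dY: "(Y has_field_derivative deriv Y z) (at z)"
    using holomorphic_Y open_V assms by (rule holomorphic_derivI)
  have factor: "((\<lambda>z. z^2 - p) has_field_derivative 2 * z) (at z)" for p
    by (auto intro!: derivative_eq_intros)
  have "((\<lambda>z. (z^2 - r) * (z^2 - s)) has_field_derivative
      2 * z * (z^2 - s) + 2 * z * (z^2 - r)) (at z)"
    by (rule DERIV_mult[OF factor factor])
  then have "deriv Y z = - Y z * (2 * z * (z^2 - s) + 2 * z * (z^2 - r)) / (2 * ((z^2 - r) * (z^2 - s)))"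
    using has_field_derivative_inverse_sqrt[OF open_V assms Y_sqrt_eq dY] by (simp only:)
  also have "\<dots> = - Y z * z * (1 / (z^2 - r) + 1 / (z^2 - s))"
  proof -
    have "- y * (2 * z * S + 2 * z * R) / (2 * (R * S)) = - y * z * (1 / R + 1 / S)"
      if "R \<noteq> 0" "S \<noteq> 0" for y R S :: complex
      using that by (simp add: field_simps)
    then show ?thesis
      using nonzero_on_V[OF assms] by blast
  qed
  finally show ?thesis
    using dY by simp
qed

lemma contour_integrals_Y_cancel: "contour_integral \<gamma>1 Y + contour_integral \<gamma>2 Y = 0"
proof -
  obtain R1 where R1: "\<And>z. R1 \<le> norm z \<Longrightarrow> z \<in> outside_insides"
    using far_in_outside_insides by blast
  obtain R2 where R2: "\<And>z. R2 \<le> norm z \<Longrightarrow> dist (z^2 * chi (r, s) z) 1 < 1"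
    using tendstoD[OF chi_infty[OF rs_in_W], of 1] unfolding eventually_at_infinity by auto
  have decay: "norm (Y z) \<le> 2 / (norm z)^2" if z: "max 1 (max R1 R2) \<le> norm z" for z
  proof -
    have "norm (z^2 * Y z) \<le> 1 + norm (z^2 * Y z - 1)"
      using norm_triangle_ineq2[of "z^2 * Y z" 1] by simp
    also have "\<dots> < 2"
      using R1[of z] R2[of z] z Y_eq_chi by (simp add: dist_norm)
    finally have "(norm z)^2 * norm (Y z) \<le> 2"
      by (simp add: norm_mult norm_power)
    then show ?thesis
      using z by (subst pos_le_divide_eq) (auto simp: mult.commute)
  qed
  have "- V \<subseteq> - outside_discs"
    using outside_discs_subset outside_insides_subset_V by auto
  then have "bounded (- V)"
    using bounded_compl_outside_discs bounded_subset by blast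
  moreover have "path_image \<gamma>1 \<subseteq> V" "path_image \<gamma>2 \<subseteq> V"
    using path_images_subset outside_insides_subset_V by auto
  moreover have "winding_number \<gamma>1 w + winding_number \<gamma>2 w = -1" if "w \<notin> V" for w
    using that outside_insides_subset_V winding_numbers_off_outside_insides by blast
  ultimately show ?thesis
    using contour_integral_loops_eq_0_if_decay[OF open_V connected_V _ holomorphic_Y curve1(1,3) _
        curve2(1,3) _ _ decay] by blast
qed

lemma exact_term_has_derivative:
  assumes "z \<in> U \<inter> V"
  shows "((\<lambda>z. Phi z * Y z) has_field_derivative
      (2 * a * z * \<phi>1 z + 2 * c * z * \<phi>2 z + 2) * Y z - Phi z * Y z * z * (1 / (z^2 - r) + 1 / (z^2 - s)))
      (at z)"
proof -
  have "z \<in> U" "z \<in> V"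
    using assms by auto
  then show ?thesis
    by (intro DERIV_cong[OF DERIV_mult[OF has_field_derivative_Phi has_field_derivative_Y]])
      (simp_all add: algebra_simps)
qed

lemma contour_integrable_branch_quotient:
  assumes "\<phi> holomorphic_on U" "\<And>z. z \<in> V \<Longrightarrow> z^2 - p \<noteq> 0"
    and "valid_path \<gamma>" "path_image \<gamma> \<subseteq> U \<inter> V"
  shows "(\<lambda>z. z * \<phi> z * Y z / (2 * (z^2 - p))) contour_integrable_on \<gamma>"
proof (rule contour_integrable_holomorphic_simple[of _ "U \<inter> V"])
  show "(\<lambda>z. z * \<phi> z * Y z / (2 * (z^2 - p))) holomorphic_on U \<inter> V"
    using assms(2) by (intro holomorphic_intros holomorphic_on_subset[OF assms(1)]
        holomorphic_on_subset[OF holomorphic_Y]) auto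
qed (use assms(3,4) open_V U_open in auto)

lemma loop_combination:
  assumes \<gamma>: "valid_path \<gamma>" "pathfinish \<gamma> = pathstart \<gamma>" "path_image \<gamma> \<subseteq> U \<inter> V"
  shows "(a * r + b) * contour_integral \<gamma> (\<lambda>z. z * \<phi>1 z * Y z / (2 * (z^2 - r)))
       + (c * r + d) * contour_integral \<gamma> (\<lambda>z. z * \<phi>2 z * Y z / (2 * (z^2 - r)))
       + (a * s + b) * contour_integral \<gamma> (\<lambda>z. z * \<phi>1 z * Y z / (2 * (z^2 - s)))
       + (c * s + d) * contour_integral \<gamma> (\<lambda>z. z * \<phi>2 z * Y z / (2 * (z^2 - s)))
     = contour_integral \<gamma> Y"
proof -
  define D where "D z = (2 * a * z * \<phi>1 z + 2 * c * z * \<phi>2 z + 2) * Y z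
      - Phi z * Y z * z * (1 / (z^2 - r) + 1 / (z^2 - s))" for z
  have "((\<lambda>z. Phi z * Y z) has_field_derivative D z) (at z within U \<inter> V)" if "z \<in> U \<inter> V" for z
    unfolding D_def using exact_term_has_derivative[OF that] by (rule has_field_derivative_at_within)
  then have "(D has_contour_integral 0) \<gamma>"
    using \<gamma>(1,3,2) by (rule Cauchy_theorem_primitive)
  let ?integrand = "\<lambda>z. (a * r + b) * (z * \<phi>1 z * Y z / (2 * (z^2 - r)))
      + (c * r + d) * (z * \<phi>2 z * Y z / (2 * (z^2 - r)))
      + (a * s + b) * (z * \<phi>1 z * Y z / (2 * (z^2 - s)))
      + (c * s + d) * (z * \<phi>2 z * Y z / (2 * (z^2 - s)))"
  have lhs: "(?integrand has_contour_integral
      (a * r + b) * contour_integral \<gamma> (\<lambda>z. z * \<phi>1 z * Y z / (2 * (z^2 - r)))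
       + (c * r + d) * contour_integral \<gamma> (\<lambda>z. z * \<phi>2 z * Y z / (2 * (z^2 - r)))
       + (a * s + b) * contour_integral \<gamma> (\<lambda>z. z * \<phi>1 z * Y z / (2 * (z^2 - s)))
       + (c * s + d) * contour_integral \<gamma> (\<lambda>z. z * \<phi>2 z * Y z / (2 * (z^2 - s)))) \<gamma>"
    using nonzero_on_V \<gamma>(1,3)
    by (intro has_contour_integral_add has_contour_integral_lmul has_contour_integral_integral
        contour_integrable_branch_quotient hol1 hol2) auto
  have "Y contour_integrable_on \<gamma>"
    using \<gamma> open_V U_open
    by (intro contour_integrable_holomorphic_simple[of _ "U \<inter> V"] holomorphic_on_subset[OF holomorphic_Y]) auto
  then have rhs: "((\<lambda>z. Y z - D z / 2) has_contour_integral contour_integral \<gamma> Y - 0 / 2) \<gamma>"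
    using \<open>(D has_contour_integral 0) \<gamma>\<close>
    by (intro has_contour_integral_diff has_contour_integral_div has_contour_integral_integral)
  have "Y z - D z / 2 = ?integrand z" if "z \<in> path_image \<gamma>" for z
  proof -
    have "z^2 - r \<noteq> 0" "z^2 - s \<noteq> 0"
      using nonzero_on_V that \<gamma>(3) by auto
    then show ?thesis
      using twistor_integrand_identity[of "z^2 - r" "z^2 - s" a "z^2" b z "\<phi>1 z" "Y z" c d "\<phi>2 z"]
      by (simp add: D_def Phi_def)
  qed
  then have "(?integrand has_contour_integral contour_integral \<gamma> Y - 0 / 2) \<gamma>"
    by (rule has_contour_integral_eq[OF rhs])
  then show ?thesis
    using has_contour_integral_unique[OF lhs] by simp
qed

lemma contour_integral_chi_has_derivative:
  fixes X :: "complex \<Rightarrow> complex \<Rightarrow> complex" and m :: "complex \<Rightarrow> complex"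
  assumes "\<epsilon> > 0" and I: "open I" "I \<inter> outside_insides = {}"
    and roots: "\<And>p z. p \<in> cball p0 \<epsilon> \<Longrightarrow> z^2 = p \<Longrightarrow> z \<in> I"
    and X: "\<And>p. p \<in> cball p0 \<epsilon> \<Longrightarrow> continuous_on outside_insides (X p)"
      "\<And>p z. p \<in> cball p0 \<epsilon> \<Longrightarrow> z \<in> outside_insides \<Longrightarrow> (X p z)^2 * ((z^2 - p) * m z) = 1"
      "\<And>p. p \<in> cball p0 \<epsilon> \<Longrightarrow> ((\<lambda>z. z^2 * X p z) \<longlongrightarrow> 1) at_infinity"
      "\<And>z. z \<in> outside_insides \<Longrightarrow> X p0 z = Y z"
    and \<phi>: "\<phi> holomorphic_on U"
    and \<gamma>: "valid_path \<gamma>" "path_image \<gamma> \<subseteq> U" "path_image \<gamma> \<subseteq> outside_insides"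
  shows "((\<lambda>p. contour_integral \<gamma> (\<lambda>z. z * \<phi> z * X p z)) has_field_derivative
    contour_integral \<gamma> (\<lambda>z. z * \<phi> z * Y z / (2 * (z^2 - p0)))) (at p0)"
proof -
  obtain \<delta> where \<delta>: "\<delta> > 0" "\<And>p z. p \<in> cball p0 \<epsilon> \<Longrightarrow> z \<in> outside_insides \<Longrightarrow> \<delta> \<le> cmod (z^2 - p)"
  proof (rule square_roots_separated[OF I(1) closed_outside_insides I(2)])
    show "\<And>p z. p \<in> cball p0 \<epsilon> \<Longrightarrow> z^2 = p \<Longrightarrow> z \<in> I"
      by (rule roots)
  qed blast
  have p0: "p0 \<in> cball p0 \<epsilon>"
    using \<open>\<epsilon> > 0\<close> by simp
  define S where "S = U \<inter> V \<inter> {z. \<delta>/2 < cmod (z^2 - p0)}"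
  have "open S"
    unfolding S_def using U_open open_V
    by (intro open_Int open_Collect_less) (auto intro!: continuous_intros)
  have "path_image \<gamma> \<subseteq> S"
  proof
    fix z assume "z \<in> path_image \<gamma>"
    then have "z \<in> U" "z \<in> outside_insides"
      using \<gamma>(2,3) by auto
    then show "z \<in> S"
      using \<delta>(1) \<delta>(2)[OF p0] outside_insides_subset_V by (force simp: S_def)
  qed
  have branch: "X p z = Y z * csqrt ((z^2 - p0) / (z^2 - p))"
    if p: "p \<in> ball p0 (min \<epsilon> (\<delta>/4))" and z: "z \<in> path_image \<gamma>" for p z
  proof -
    obtain R where far: "\<And>z. R \<le> norm z \<Longrightarrow> z \<in> outside_insides"
      using far_in_outside_insides by blast
    have "p \<in> cball p0 \<epsilon>"
      using p by auto
    moreover have "cmod (p - p0) < cmod (w^2 - p)" if "w \<in> outside_insides" for w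
      using p \<delta>(2)[OF \<open>p \<in> cball p0 \<epsilon>\<close> that] \<delta>(1) by (simp add: dist_norm norm_minus_commute)
    moreover have "z \<in> outside_insides"
      using z \<gamma>(3) by auto
    ultimately show ?thesis
      using branch_eq_mult_csqrt_ratio[OF connected_outside_insides far _ X(1-3)[OF p0] X(1-3)]
        X(4) by simp
  qed
  have "S \<subseteq> U" "S \<subseteq> V"
    by (auto simp: S_def)
  then have "(\<lambda>z. z * \<phi> z) holomorphic_on S" "Y holomorphic_on S"
    using holomorphic_on_subset[OF \<phi>] holomorphic_on_subset[OF holomorphic_Y]
    by (auto intro!: holomorphic_intros)
  moreover have "\<delta>/2 > 0" "\<And>z. z \<in> S \<Longrightarrow> \<delta>/2 < cmod (z^2 - p0)"
    using \<delta>(1) by (simp_all add: S_def)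
  moreover have "min \<epsilon> (\<delta>/4) > 0" "min \<epsilon> (\<delta>/4) \<le> (\<delta>/2)/2"
    using \<delta>(1) \<open>\<epsilon> > 0\<close> by simp_all
  ultimately show ?thesis
    using contour_integral_branch_has_field_derivative[OF \<open>open S\<close> _ _ _ _ \<gamma>(1) \<open>path_image \<gamma> \<subseteq> S\<close>
        _ _ branch] by blast
qed

lemma parameter_balls_in_W:
  obtains \<epsilon> where "\<epsilon> > 0" "\<And>p. p \<in> cball r \<epsilon> \<Longrightarrow> (p, s) \<in> W" "\<And>p. p \<in> cball s \<epsilon> \<Longrightarrow> (r, p) \<in> W"
proof -
  obtain e where "e > 0" "ball (r, s) e \<subseteq> W"
    using W_open rs_in_W open_contains_ball by blast
  then show ?thesis
    by (intro that[of "e/2"]) (auto simp: dist_Pair_Pair subset_iff)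
qed

lemma inside_open_disjoint:
  "open (inside (path_image \<gamma>1))" "inside (path_image \<gamma>1) \<inter> outside_insides = {}"
  "open (inside (path_image \<gamma>2))" "inside (path_image \<gamma>2) \<inter> outside_insides = {}"
  using curve1(1) curve2(1)
  by (auto simp: outside_insides_def intro!: open_inside closed_path_image valid_path_imp_path)

abbreviation "twistor_G_factor \<equiv> - (1 / (4 * complex_of_real pi * \<i>))"

lemma twistor_G_has_derivative_fst:
  assumes "\<phi> holomorphic_on U"
  shows "((\<lambda>p. twistor_G \<phi> \<gamma>1 \<gamma>2 chi (p, s)) has_field_derivative
    twistor_G_factor * (contour_integral \<gamma>1 (\<lambda>z. z * \<phi> z * Y z / (2 * (z^2 - r)))
              + contour_integral \<gamma>2 (\<lambda>z. z * \<phi> z * Y z / (2 * (z^2 - r))))) (at r)"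
proof -
  obtain \<epsilon> where \<epsilon>: "\<epsilon> > 0" "\<And>p. p \<in> cball r \<epsilon> \<Longrightarrow> (p, s) \<in> W"
    using parameter_balls_in_W by blast
  have "((\<lambda>p. contour_integral \<gamma> (\<lambda>z. z * \<phi> z * chi (p, s) z)) has_field_derivative
      contour_integral \<gamma> (\<lambda>z. z * \<phi> z * Y z / (2 * (z^2 - r)))) (at r)"
    if "valid_path \<gamma>" "path_image \<gamma> \<subseteq> U" "path_image \<gamma> \<subseteq> outside_insides" for \<gamma>
  proof (rule contour_integral_chi_has_derivative[OF \<epsilon>(1) inside_open_disjoint(1,2)])
    show "(chi (p, s) z)^2 * ((z^2 - p) * (z^2 - s)) = 1"
      if "p \<in> cball r \<epsilon>" "z \<in> outside_insides" for p z
      using chi_sqrt_eq[OF \<epsilon>(2)[OF that(1)] that(2)] .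
    show "z \<in> inside (path_image \<gamma>1)" if "p \<in> cball r \<epsilon>" "z^2 = p" for p z
      using roots_r[OF \<epsilon>(2)[OF that(1)] that(2)] .
  qed (use \<epsilon>(2) roots_r chi_continuous chi_infty Y_eq_chi assms that in simp_all)
  then show ?thesis
    unfolding twistor_G_def using curve1(1) curve2(1) C_in_U path_images_subset
    by (intro DERIV_cmult DERIV_add) auto
qed

lemma twistor_G_has_derivative_snd:
  assumes "\<phi> holomorphic_on U"
  shows "((\<lambda>p. twistor_G \<phi> \<gamma>1 \<gamma>2 chi (r, p)) has_field_derivative
    twistor_G_factor * (contour_integral \<gamma>1 (\<lambda>z. z * \<phi> z * Y z / (2 * (z^2 - s)))
              + contour_integral \<gamma>2 (\<lambda>z. z * \<phi> z * Y z / (2 * (z^2 - s))))) (at s)"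
proof -
  obtain \<epsilon> where \<epsilon>: "\<epsilon> > 0" "\<And>p. p \<in> cball s \<epsilon> \<Longrightarrow> (r, p) \<in> W"
    using parameter_balls_in_W by blast
  have "((\<lambda>p. contour_integral \<gamma> (\<lambda>z. z * \<phi> z * chi (r, p) z)) has_field_derivative
      contour_integral \<gamma> (\<lambda>z. z * \<phi> z * Y z / (2 * (z^2 - s)))) (at s)"
    if "valid_path \<gamma>" "path_image \<gamma> \<subseteq> U" "path_image \<gamma> \<subseteq> outside_insides" for \<gamma>
  proof (rule contour_integral_chi_has_derivative[OF \<epsilon>(1) inside_open_disjoint(3,4)])
    show "(chi (r, p) z)^2 * ((z^2 - p) * (z^2 - r)) = 1"
      if "p \<in> cball s \<epsilon>" "z \<in> outside_insides" for p z
      using chi_sqrt_eq[OF \<epsilon>(2)[OF that(1)] that(2)] by (simp only: mult.commute)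
    show "z \<in> inside (path_image \<gamma>2)" if "p \<in> cball s \<epsilon>" "z^2 = p" for p z
      using roots_s[OF \<epsilon>(2)[OF that(1)] that(2)] .
  qed (use \<epsilon>(2) roots_s chi_continuous chi_infty Y_eq_chi assms that in simp_all)
  then show ?thesis
    unfolding twistor_G_def using curve1(1) curve2(1) C_in_U path_images_subset
    by (intro DERIV_cmult DERIV_add) auto
qed

lemma twistor_relation:
  "(\<lambda>r'. twistor_G \<phi>1 \<gamma>1 \<gamma>2 chi (r', s)) field_differentiable (at r) \<and>
   (\<lambda>r'. twistor_G \<phi>2 \<gamma>1 \<gamma>2 chi (r', s)) field_differentiable (at r) \<and>
   (\<lambda>s'. twistor_G \<phi>1 \<gamma>1 \<gamma>2 chi (r, s')) field_differentiable (at s) \<and>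
   (\<lambda>s'. twistor_G \<phi>2 \<gamma>1 \<gamma>2 chi (r, s')) field_differentiable (at s) \<and>
   (a * r + b) * deriv (\<lambda>r'. twistor_G \<phi>1 \<gamma>1 \<gamma>2 chi (r', s)) r
   + (c * r + d) * deriv (\<lambda>r'. twistor_G \<phi>2 \<gamma>1 \<gamma>2 chi (r', s)) r
   + (a * s + b) * deriv (\<lambda>s'. twistor_G \<phi>1 \<gamma>1 \<gamma>2 chi (r, s')) s
   + (c * s + d) * deriv (\<lambda>s'. twistor_G \<phi>2 \<gamma>1 \<gamma>2 chi (r, s')) s = 0"
proof -
  have loops: "valid_path \<gamma>" "pathfinish \<gamma> = pathstart \<gamma>" "path_image \<gamma> \<subseteq> U \<inter> V"
    if "\<gamma> \<in> {\<gamma>1, \<gamma>2}" for \<gamma>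
    using that curve1 curve2 C_in_U path_images_subset outside_insides_subset_V by auto
  define J where "J \<phi> \<gamma> p = contour_integral \<gamma> (\<lambda>z. z * \<phi> z * Y z / (2 * (z^2 - p)))" for \<phi> \<gamma> p
  define k where "k = twistor_G_factor"
  note derivatives = twistor_G_has_derivative_fst[OF hol1, folded J_def k_def]
    twistor_G_has_derivative_fst[OF hol2, folded J_def k_def]
    twistor_G_has_derivative_snd[OF hol1, folded J_def k_def]
    twistor_G_has_derivative_snd[OF hol2, folded J_def k_def]
  have combination: "(a * r + b) * J \<phi>1 \<gamma> r + (c * r + d) * J \<phi>2 \<gamma> r
      + (a * s + b) * J \<phi>1 \<gamma> s + (c * s + d) * J \<phi>2 \<gamma> s = contour_integral \<gamma> Y"
    if "\<gamma> \<in> {\<gamma>1, \<gamma>2}" for \<gamma>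
    unfolding J_def by (rule loop_combination[OF loops[OF that]])
  have "(a * r + b) * deriv (\<lambda>r'. twistor_G \<phi>1 \<gamma>1 \<gamma>2 chi (r', s)) r
      + (c * r + d) * deriv (\<lambda>r'. twistor_G \<phi>2 \<gamma>1 \<gamma>2 chi (r', s)) r
      + (a * s + b) * deriv (\<lambda>s'. twistor_G \<phi>1 \<gamma>1 \<gamma>2 chi (r, s')) s
      + (c * s + d) * deriv (\<lambda>s'. twistor_G \<phi>2 \<gamma>1 \<gamma>2 chi (r, s')) s
      = k * ((a * r + b) * J \<phi>1 \<gamma>1 r + (c * r + d) * J \<phi>2 \<gamma>1 r
             + (a * s + b) * J \<phi>1 \<gamma>1 s + (c * s + d) * J \<phi>2 \<gamma>1 s)
      + k * ((a * r + b) * J \<phi>1 \<gamma>2 r + (c * r + d) * J \<phi>2 \<gamma>2 r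
             + (a * s + b) * J \<phi>1 \<gamma>2 s + (c * s + d) * J \<phi>2 \<gamma>2 s)"
    by (simp add: DERIV_imp_deriv[OF derivatives(1)] DERIV_imp_deriv[OF derivatives(2)]
        DERIV_imp_deriv[OF derivatives(3)] DERIV_imp_deriv[OF derivatives(4)] algebra_simps)
  also have "\<dots> = k * (contour_integral \<gamma>1 Y + contour_integral \<gamma>2 Y)"
    using combination[of \<gamma>1] combination[of \<gamma>2] by (simp add: distrib_left)
  also have "\<dots> = 0"
    by (simp add: contour_integrals_Y_cancel)
  finally show ?thesis
    using derivatives by (auto simp: field_differentiable_def)
qed

end

theorem mainTheorem7:
  fixes a b c d :: complex
    and U :: "complex set"
    and \<phi>1 \<phi>2 :: "complex \<Rightarrow> complex"
    and W :: "(complex \<times> complex) set"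
    and \<gamma>1 \<gamma>2 :: "real \<Rightarrow> complex"
    and chi :: "complex \<times> complex \<Rightarrow> complex \<Rightarrow> complex"
  assumes U_open: "open U"
    and hol1: "\<phi>1 holomorphic_on U"
    and hol2: "\<phi>2 holomorphic_on U"
    and ode: "\<forall>z\<in>U. (a * z^2 + b) * deriv \<phi>1 z + (c * z^2 + d) * deriv \<phi>2 z = 2"
    and W_open: "open W"
    and curve1: "valid_path \<gamma>1" "simple_path \<gamma>1" "pathfinish \<gamma>1 = pathstart \<gamma>1"
    and curve2: "valid_path \<gamma>2" "simple_path \<gamma>2" "pathfinish \<gamma>2 = pathstart \<gamma>2"
    and C_in_U: "path_image \<gamma>1 \<subseteq> U" "path_image \<gamma>2 \<subseteq> U"
    and discs_disjoint:
      "(path_image \<gamma>1 \<union> inside (path_image \<gamma>1)) \<inter>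
       (path_image \<gamma>2 \<union> inside (path_image \<gamma>2)) = {}"
    and orient1: "\<forall>w\<in>inside (path_image \<gamma>1). winding_number \<gamma>1 w = -1"
    and orient2: "\<forall>w\<in>inside (path_image \<gamma>2). winding_number \<gamma>2 w = -1"
    and roots_r: "\<forall>r s z. (r, s) \<in> W \<longrightarrow> z^2 = r \<longrightarrow> z \<in> inside (path_image \<gamma>1)"
    and roots_s: "\<forall>r s z. (r, s) \<in> W \<longrightarrow> z^2 = s \<longrightarrow> z \<in> inside (path_image \<gamma>2)"
    and chi_cont: "\<forall>r s. (r, s) \<in> W \<longrightarrow>
        continuous_on (- (inside (path_image \<gamma>1) \<union> inside (path_image \<gamma>2))) (chi (r, s))"
    and chi_hol: "\<forall>r s. (r, s) \<in> W \<longrightarrow>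
        chi (r, s) holomorphic_on
          - ((path_image \<gamma>1 \<union> inside (path_image \<gamma>1)) \<union>
             (path_image \<gamma>2 \<union> inside (path_image \<gamma>2)))"
    and chi_sq: "\<forall>r s z. (r, s) \<in> W \<longrightarrow>
        z \<notin> inside (path_image \<gamma>1) \<union> inside (path_image \<gamma>2) \<longrightarrow>
        (chi (r, s) z)^2 * ((z^2 - r) * (z^2 - s)) = 1"
    and chi_infty: "\<forall>r s. (r, s) \<in> W \<longrightarrow>
        ((\<lambda>z. z^2 * chi (r, s) z) \<longlongrightarrow> 1) at_infinity"
  shows "\<forall>r s. (r, s) \<in> W \<longrightarrow>
     (let G1 = twistor_G \<phi>1 \<gamma>1 \<gamma>2 chi; G2 = twistor_G \<phi>2 \<gamma>1 \<gamma>2 chi in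
       (\<lambda>r'. G1 (r', s)) field_differentiable (at r) \<and>
       (\<lambda>r'. G2 (r', s)) field_differentiable (at r) \<and>
       (\<lambda>s'. G1 (r, s')) field_differentiable (at s) \<and>
       (\<lambda>s'. G2 (r, s')) field_differentiable (at s) \<and>
       (a * r + b) * deriv (\<lambda>r'. G1 (r', s)) r + (c * r + d) * deriv (\<lambda>r'. G2 (r', s)) r
       + (a * s + b) * deriv (\<lambda>s'. G1 (r, s')) s + (c * s + d) * deriv (\<lambda>s'. G2 (r, s')) s = 0)"
proof -
  interpret twistor_data \<gamma>1 \<gamma>2 a b c d U \<phi>1 \<phi>2 W chi
    by unfold_locales (use assms in auto)
  {
    fix r s assume "(r, s) \<in> W"
    then obtain V Y where "twistor_extension \<gamma>1 \<gamma>2 a b c d U \<phi>1 \<phi>2 W chi r s V Y"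
      by (rule chi_extension_exists)
    note twistor_extension.twistor_relation[OF this]
  }
  then show ?thesis
    unfolding Let_def by blast
qed

end
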